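(* Let $\varepsilon>0$, $F\in C^1(\mathbb{R})$ and $a\in C(]0,1[\times[0,\infty)\times\mathbb{R}^4)$, and consider for $t_0\ge0$ the problem $$-\varepsilon u_{xxt}+u_{tt}-u_{xx}=F(u)-a(x,t,u,u_x,u_{xx},u_t)\,u_t,\quad x\in(0,1),\ t>t_0,\qquad u(0,t)=u(1,t)=0,$$ with $u(x,t_0)=u_0(x)$, $u_t(x,t_0)=u_1(x)$, $u_0(0)=u_0(1)=u_1(0)=u_1(1)=0$. Assume: $F(0)=0$ and there is a constant $K>0$ with $F'(s)\le K<3\pi^2/4$ for all $s$; $\nu:=\varepsilon\pi^2+\inf a>0$; and there exist $\tau\in[0,2[$ and constants $A>0$, $A'\ge0$ such that $a(x,t,\varphi,\varphi_x,\varphi_{xx},\psi)\le A\,[d(\varphi,\psi)]^{\tau}+A'$ for all $x,t$ and $(\varphi,\psi)\in\Gamma$. Then the null solution is exponential-asymptotically stable in the large.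
   Context: $\Gamma:=\{(\varphi,\psi):\varphi\in C^2([0,1]),\ \psi\in C([0,1]),\ \varphi(0)=\varphi(1)=\psi(0)=\psi(1)=0\}$, $d^2(\varphi,\psi):=\int_0^1(\varphi^2+\varphi_x^2+\varphi_{xx}^2+\psi^2)dx$. The null solution is exponential-asymptotically stable in the large if for every $\alpha>0$ there are constants $D(\alpha),C(\alpha)>0$ such that, for every $t_0\ge0$ and initial data with $d(u_0,u_1)\le\alpha$, the solution satisfies $d(u(\cdot,t),u_t(\cdot,t))\le D(\alpha)e^{-C(\alpha)(t-t_0)}d(u_0,u_1)$ for all $t\ge t_0$. *)

theory Defs
  imports "HOL-Analysis.Analysis"
begin

text \<open>The metric d on Gamma. A C^2 function phi on [0,1] is represented together
  with its first and second derivatives phix, phixx (on [0,1]).\<close>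
definition dG :: "(real \<Rightarrow> real) \<Rightarrow> (real \<Rightarrow> real) \<Rightarrow> (real \<Rightarrow> real) \<Rightarrow> (real \<Rightarrow> real) \<Rightarrow> real" where
  "dG phi phix phixx psi =
     sqrt (integral {0..1} (\<lambda>x. (phi x)\<^sup>2 + (phix x)\<^sup>2 + (phixx x)\<^sup>2 + (psi x)\<^sup>2))"

definition in_Gamma :: "(real \<Rightarrow> real) \<Rightarrow> (real \<Rightarrow> real) \<Rightarrow> (real \<Rightarrow> real) \<Rightarrow> (real \<Rightarrow> real) \<Rightarrow> bool" where
  "in_Gamma phi phix phixx psi \<longleftrightarrow>
     (\<forall>x\<in>{0..1}. (phi has_real_derivative phix x) (at x within {0..1})
                \<and> (phix has_real_derivative phixx x) (at x within {0..1}))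
   \<and> continuous_on {0..1} phixx \<and> continuous_on {0..1} psi
   \<and> phi 0 = 0 \<and> phi 1 = 0 \<and> psi 0 = 0 \<and> psi 1 = 0"

text \<open>Real power with the convention 0^0 = 1 (Isabelle's powr has 0 powr 0 = 0).\<close>
definition rpow :: "real \<Rightarrow> real \<Rightarrow> real" where
  "rpow d tau = (if tau = 0 then 1 else d powr tau)"

definition is_solution ::
  "real \<Rightarrow> (real \<Rightarrow> real) \<Rightarrow> (real \<Rightarrow> real \<Rightarrow> real \<Rightarrow> real \<Rightarrow> real \<Rightarrow> real \<Rightarrow> real) \<Rightarrow> real
   \<Rightarrow> (real \<Rightarrow> real \<Rightarrow> real) \<Rightarrow> (real \<Rightarrow> real \<Rightarrow> real) \<Rightarrow> (real \<Rightarrow> real \<Rightarrow> real) \<Rightarrow> (real \<Rightarrow> real \<Rightarrow> real) \<Rightarrow> bool" where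
  "is_solution eps F a t0 u ux uxx ut \<longleftrightarrow>
     (\<exists>utt uxxt :: real \<Rightarrow> real \<Rightarrow> real.
        (\<forall>f \<in> {u, ux, uxx, ut, utt, uxxt}. continuous_on ({0..1} \<times> {t0..}) (\<lambda>(x, t). f x t))
      \<and> (\<forall>x\<in>{0..1}. \<forall>t\<in>{t0..}.
            ((\<lambda>y. u y t) has_real_derivative ux x t) (at x within {0..1})
          \<and> ((\<lambda>y. ux y t) has_real_derivative uxx x t) (at x within {0..1})
          \<and> ((\<lambda>s. u x s) has_real_derivative ut x t) (at t within {t0..})
          \<and> ((\<lambda>s. ut x s) has_real_derivative utt x t) (at t within {t0..})
          \<and> ((\<lambda>s. uxx x s) has_real_derivative uxxt x t) (at t within {t0..}))
      \<and> (\<forall>t\<in>{t0..}. u 0 t = 0 \<and> u 1 t = 0)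
      \<and> (\<forall>x\<in>{0<..<1}. \<forall>t\<in>{t0<..}.
            - eps * uxxt x t + utt x t - uxx x t
              = F (u x t) - a x t (u x t) (ux x t) (uxx x t) (ut x t) * ut x t))"

definition exp_stable_large ::
  "real \<Rightarrow> (real \<Rightarrow> real) \<Rightarrow> (real \<Rightarrow> real \<Rightarrow> real \<Rightarrow> real \<Rightarrow> real \<Rightarrow> real \<Rightarrow> real) \<Rightarrow> bool" where
  "exp_stable_large eps F a \<longleftrightarrow>
     (\<forall>\<alpha>>0. \<exists>D C. D > 0 \<and> C > 0 \<and>
        (\<forall>t0\<ge>0. \<forall>u ux uxx ut.
           is_solution eps F a t0 u ux uxx ut
           \<and> dG (\<lambda>x. u x t0) (\<lambda>x. ux x t0) (\<lambda>x. uxx x t0) (\<lambda>x. ut x t0) \<le> \<alpha>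
           \<longrightarrow> (\<forall>t\<ge>t0. dG (\<lambda>x. u x t) (\<lambda>x. ux x t) (\<lambda>x. uxx x t) (\<lambda>x. ut x t)
                  \<le> D * exp (- C * (t - t0))
                       * dG (\<lambda>x. u x t0) (\<lambda>x. ux x t0) (\<lambda>x. uxx x t0) (\<lambda>x. ut x t0))))"

end

theory Submission
  imports Defs
begin

text \<open>
  The energy \<open>E = (\<parallel>u\<^sub>t\<parallel>\<^sup>2 + \<parallel>u\<^sub>x\<parallel>\<^sup>2)/2 - \<integral>G(u)\<close>, \<open>G' = F\<close>, is nonincreasing, because
  \<open>E' = -\<epsilon>\<parallel>u\<^sub>x\<^sub>t\<parallel>\<^sup>2 - \<integral>a u\<^sub>t\<^sup>2\<close> and \<open>\<epsilon>\<pi>\<^sup>2 + inf a > 0\<close>. As \<open>F' \<le> K < \<pi>\<^sup>2\<close>, Wirtinger's inequality makes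
  \<open>E\<close> coercive, so \<open>\<parallel>u\<^sub>t\<parallel>\<close>, \<open>\<parallel>u\<^sub>x\<parallel>\<close> and \<open>sup |u|\<close> stay bounded by the initial distance \<open>\<alpha>\<close>.
  The missing control of \<open>u\<^sub>x\<^sub>x\<close>, on which \<open>a\<close> may depend, comes from \<open>Y = \<parallel>\<epsilon>u\<^sub>x\<^sub>x - u\<^sub>t\<parallel>\<^sup>2\<close>:
  the equation gives \<open>Y' \<le> -(2/\<epsilon>)Y + (1 + Y)\<^bsup>\<beta>\<^esup>(C + H)\<close> with \<open>\<beta> = 1/2 + \<tau>/4 < 1\<close>, where \<open>H\<close> is
  the part of the dissipation of \<open>E\<close> exceeding \<open>inf a \<parallel>u\<^sub>t\<parallel>\<^sup>2\<close>. Hence \<open>(1 + Y)\<^bsup>1-\<beta>\<^esup> + (1 - \<beta>)E\<close>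
  is bounded, and so are \<open>d\<close> and \<open>a\<close> along the solution. With \<open>a\<close> bounded, the functional
  \<open>V = E + \<delta>(\<integral>u u\<^sub>t + (\<epsilon>/2)\<parallel>u\<^sub>x\<parallel>\<^sup>2) + \<gamma>Y\<close> with small \<open>\<delta>, \<gamma>\<close> is comparable to
  \<open>\<parallel>u\<^sub>t\<parallel>\<^sup>2 + \<parallel>u\<^sub>x\<parallel>\<^sup>2 + Y\<close>, hence to \<open>d\<^sup>2\<close>, and satisfies \<open>V' \<le> -cV\<close>.
\<close>

section \<open>Integral inequalities on an interval\<close>

lemma continuous_on_if_has_real_derivative_within:
  fixes f f' :: "real \<Rightarrow> real"
  assumes "\<forall>x\<in>S. (f has_real_derivative f' x) (at x within S)"
  shows "continuous_on S f"
  using assms by (meson DERIV_continuous continuous_on_eq_continuous_within)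

lemma integral_mult_square_le:
  fixes f g :: "real \<Rightarrow> real"
  assumes f: "continuous_on {a..b} f" and g: "continuous_on {a..b} g"
  shows "(integral {a..b} (\<lambda>x. f x * g x))\<^sup>2
           \<le> integral {a..b} (\<lambda>x. (f x)\<^sup>2) * integral {a..b} (\<lambda>x. (g x)\<^sup>2)"
proof -
  define P where "P = integral {a..b} (\<lambda>x. (f x)\<^sup>2)"
  define Q where "Q = integral {a..b} (\<lambda>x. f x * g x)"
  define R where "R = integral {a..b} (\<lambda>x. (g x)\<^sup>2)"
  have quadratic_nonneg: "0 \<le> P - 2 * w * Q + w\<^sup>2 * R" for w
  proof -
    have "0 \<le> integral {a..b} (\<lambda>x. (f x - w * g x)\<^sup>2)"
      by (rule integral_nonneg) (auto intro!: integrable_continuous_interval continuous_intros f g)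
    also have "integral {a..b} (\<lambda>x. (f x - w * g x)\<^sup>2) =
       integral {a..b} (\<lambda>x. (f x)\<^sup>2 - (2 * w) * (f x * g x) + w\<^sup>2 * (g x)\<^sup>2)"
      by (simp add: power2_eq_square algebra_simps)
    also have "\<dots> = P - 2 * w * Q + w\<^sup>2 * R"
      unfolding P_def Q_def R_def
      by (subst integral_add integral_diff integral_mult_right,
          auto intro!: integrable_continuous_interval continuous_intros f g)+
    finally show ?thesis .
  qed
  have "R \<ge> 0"
    unfolding R_def by (rule integral_nonneg) (auto intro!: integrable_continuous_interval continuous_intros g)
  show ?thesis
  proof (cases "R = 0")
    case True
    have "Q = 0"
    proof (rule ccontr)
      assume "Q \<noteq> 0"
      with quadratic_nonneg[of "(P + 1) / (2 * Q)"] True show False by (simp add: field_simps)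
    qed
    then show ?thesis using True unfolding P_def Q_def R_def by simp
  next
    case False
    with \<open>R \<ge> 0\<close> have "R > 0" by simp
    have "0 \<le> P - 2 * (Q / R) * Q + (Q / R)\<^sup>2 * R" by (rule quadratic_nonneg)
    also have "\<dots> = P - Q\<^sup>2 / R" using \<open>R > 0\<close> by (simp add: field_simps power2_eq_square)
    finally have "Q\<^sup>2 / R \<le> P" by simp
    then show ?thesis using \<open>R > 0\<close> unfolding P_def Q_def R_def by (simp add: field_simps mult.commute)
  qed
qed

lemma abs_integral_mult_le_sqrt:
  fixes f g :: "real \<Rightarrow> real"
  assumes "continuous_on {a..b} f" and "continuous_on {a..b} g"
  shows "\<bar>integral {a..b} (\<lambda>x. f x * g x)\<bar>
           \<le> sqrt (integral {a..b} (\<lambda>x. (f x)\<^sup>2)) * sqrt (integral {a..b} (\<lambda>x. (g x)\<^sup>2))"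
  using real_sqrt_le_mono[OF integral_mult_square_le[OF assms]] by (simp add: real_sqrt_mult)

lemma integration_by_parts_within:
  fixes f f' g g' :: "real \<Rightarrow> real"
  assumes "a \<le> b"
    and df: "\<forall>x\<in>{a..b}. (f has_real_derivative f' x) (at x within {a..b})"
    and dg: "\<forall>x\<in>{a..b}. (g has_real_derivative g' x) (at x within {a..b})"
    and cf: "continuous_on {a..b} f'" and cg: "continuous_on {a..b} g'"
  shows "integral {a..b} (\<lambda>x. f x * g' x) = f b * g b - f a * g a - integral {a..b} (\<lambda>x. f' x * g x)"
proof -
  have fc: "continuous_on {a..b} f" and gc: "continuous_on {a..b} g"
    using df dg by (auto intro: continuous_on_if_has_real_derivative_within)
  have "((\<lambda>x. f x * g x) has_real_derivative f' x * g x + f x * g' x) (at x within {a..b})"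
    if "x \<in> {a..b}" for x
    using df dg that by (auto intro!: derivative_eq_intros)
  then have "((\<lambda>x. f' x * g x + f x * g' x) has_integral f b * g b - f a * g a) {a..b}"
    using \<open>a \<le> b\<close> by (intro fundamental_theorem_of_calculus)
      (auto simp: has_real_derivative_iff_has_vector_derivative[symmetric])
  then have "integral {a..b} (\<lambda>x. f' x * g x + f x * g' x) = f b * g b - f a * g a"
    by (rule integral_unique)
  moreover have "integral {a..b} (\<lambda>x. f' x * g x + f x * g' x)
      = integral {a..b} (\<lambda>x. f' x * g x) + integral {a..b} (\<lambda>x. f x * g' x)"
    by (rule integral_add) (auto intro!: integrable_continuous_interval continuous_intros fc gc cf cg)
  ultimately show ?thesis by simp
qed

lemma square_le_integral_deriv_square:
  fixes f f' :: "real \<Rightarrow> real"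
  assumes df: "\<forall>x\<in>{a..b}. (f has_real_derivative f' x) (at x within {a..b})"
    and cf: "continuous_on {a..b} f'" and fa: "f a = 0" and x: "x \<in> {a..b}"
  shows "(f x)\<^sup>2 \<le> (b - a) * integral {a..b} (\<lambda>y. (f' y)\<^sup>2)"
proof -
  have sub: "{a..x} \<subseteq> {a..b}" using x by auto
  have cfx: "continuous_on {a..x} f'" using cf sub by (rule continuous_on_subset)
  have int_nonneg: "0 \<le> integral {a..x} (\<lambda>y. (f' y)\<^sup>2)"
    by (rule integral_nonneg) (auto intro!: integrable_continuous_interval continuous_intros cfx)
  have "(f' has_integral f x - f a) {a..x}"
    using x df by (intro fundamental_theorem_of_calculus)
      (auto simp: has_real_derivative_iff_has_vector_derivative[symmetric]
            intro!: DERIV_subset[OF bspec[OF df]])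
  then have fx: "f x = integral {a..x} (\<lambda>y. f' y * 1)" using fa by (simp add: integral_unique)
  have "(f x)\<^sup>2 \<le> integral {a..x} (\<lambda>y. (f' y)\<^sup>2) * integral {a..x} (\<lambda>y. 1\<^sup>2)"
    unfolding fx by (rule integral_mult_square_le[OF cfx continuous_on_const])
  also have "\<dots> = (x - a) * integral {a..x} (\<lambda>y. (f' y)\<^sup>2)" using x by simp
  also have "\<dots> \<le> (b - a) * integral {a..x} (\<lambda>y. (f' y)\<^sup>2)"
    using x int_nonneg by (intro mult_right_mono) auto
  also have "\<dots> \<le> (b - a) * integral {a..b} (\<lambda>y. (f' y)\<^sup>2)"
    using x by (intro mult_left_mono integral_subset_le[OF sub])
      (auto intro!: integrable_continuous_interval continuous_intros cfx cf)
  finally show ?thesis .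
qed

text \<open>Picone's argument: a solution \<open>c\<close> of the Riccati equation \<open>c' = -l\<^sup>2 - c\<^sup>2\<close> on \<open>[0,1]\<close>
  gives \<open>f'\<^sup>2 - l\<^sup>2 f\<^sup>2 = (f' - c f)\<^sup>2 + (c f\<^sup>2)'\<close>, and the last term integrates to zero.\<close>

lemma riccati_integral_deriv_square_ge:
  fixes f f' c c' :: "real \<Rightarrow> real"
  assumes d: "\<forall>x\<in>{0..1}. (f has_real_derivative f' x) (at x within {0..1})"
    and cf': "continuous_on {0..1} f'" and f0: "f 0 = 0" and f1: "f 1 = 0"
    and dc: "\<forall>x\<in>{0..1}. (c has_real_derivative c' x) (at x within {0..1})"
    and riccati: "\<forall>x\<in>{0..1}. c' x = - (l\<^sup>2) - (c x)\<^sup>2"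
  shows "l\<^sup>2 * integral {0..1} (\<lambda>x. (f x)\<^sup>2) \<le> integral {0..1} (\<lambda>x. (f' x)\<^sup>2)"
proof -
  have fc: "continuous_on {0..1} f" and cc: "continuous_on {0..1} c"
    using d dc by (auto intro: continuous_on_if_has_real_derivative_within)
  define g where "g x = c' x * (f x)\<^sup>2 + c x * (2 * f x * f' x)" for x
  have "((\<lambda>x. c x * (f x)\<^sup>2) has_real_derivative g x) (at x within {0..1})" if "x \<in> {0..1}" for x
    unfolding g_def using dc d that by (auto intro!: derivative_eq_intros simp: power2_eq_square)
  then have "(g has_integral c 1 * (f 1)\<^sup>2 - c 0 * (f 0)\<^sup>2) {0..1}"
    by (intro fundamental_theorem_of_calculus)
      (auto simp: has_real_derivative_iff_has_vector_derivative[symmetric])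
  then have g_int: "(g has_integral 0) {0..1}" using f0 f1 by simp
  have picone: "(f' x)\<^sup>2 - l\<^sup>2 * (f x)\<^sup>2 = (f' x - c x * f x)\<^sup>2 + g x" if "x \<in> {0..1}" for x
  proof -
    have c'x: "c' x = - (l\<^sup>2) - (c x)\<^sup>2" using riccati that by blast
    show ?thesis unfolding g_def c'x by (simp add: power2_eq_square algebra_simps)
  qed
  have sq_int: "(\<lambda>x. (f' x - c x * f x)\<^sup>2) integrable_on {0..1}"
    by (auto intro!: integrable_continuous_interval continuous_intros cf' fc cc)
  have "0 \<le> integral {0..1} (\<lambda>x. (f' x - c x * f x)\<^sup>2) + integral {0..1} g"
    using integral_unique[OF g_int] by (simp add: integral_nonneg sq_int)
  also have "\<dots> = integral {0..1} (\<lambda>x. (f' x - c x * f x)\<^sup>2 + g x)"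
    using g_int sq_int by (intro integral_add[symmetric]) auto
  also have "\<dots> = integral {0..1} (\<lambda>x. (f' x)\<^sup>2 - l\<^sup>2 * (f x)\<^sup>2)"
    by (rule integral_cong) (use picone in auto)
  also have "\<dots> = integral {0..1} (\<lambda>x. (f' x)\<^sup>2) - l\<^sup>2 * integral {0..1} (\<lambda>x. (f x)\<^sup>2)"
    by (subst integral_diff) (auto intro!: integrable_continuous_interval continuous_intros cf' fc)
  finally show ?thesis by simp
qed

text \<open>For \<open>l = \<pi>/(1 + 2\<eta>)\<close> the Riccati solution \<open>l cot (l (x + \<eta>))\<close> is smooth on \<open>[0,1]\<close>,
  since its poles lie outside.\<close>

lemma wirtinger_inequality_slack:
  fixes f f' :: "real \<Rightarrow> real"
  assumes d: "\<forall>x\<in>{0..1}. (f has_real_derivative f' x) (at x within {0..1})"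
   and c: "continuous_on {0..1} f'" and f0: "f 0 = 0" and f1: "f 1 = 0" and eta: "eta > 0"
  shows "(pi / (1 + 2 * eta))\<^sup>2 * integral {0..1} (\<lambda>x. (f x)\<^sup>2) \<le> integral {0..1} (\<lambda>x. (f' x)\<^sup>2)"
proof (rule riccati_integral_deriv_square_ge[OF d c f0 f1])
  define l where "l = pi / (1 + 2 * eta)"
  define th where "th x = l * (x + eta)" for x
  have sin_pos: "sin (th x) > 0" if "x \<in> {0..1}" for x
  proof -
    have "l > 0" unfolding l_def using eta by simp
    then have "0 < th x" "th x \<le> l * (1 + eta)" using that eta unfolding th_def by (auto intro!: mult_left_mono)
    moreover have "l * (1 + eta) < pi" unfolding l_def using eta by (simp add: field_simps)
    ultimately show ?thesis by (intro sin_gt_zero) auto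
  qed
  show "\<forall>x\<in>{0..1}. ((\<lambda>x. l * cos (th x) / sin (th x)) has_real_derivative - (l\<^sup>2) / (sin (th x))\<^sup>2)
                    (at x within {0..1})"
  proof
    fix x :: real assume x: "x \<in> {0..1}"
    have num: "l * (- sin (th x) * l) * sin (th x) - l * cos (th x) * (cos (th x) * l) = - (l\<^sup>2)"
      using sin_cos_squared_add[of "th x"] unfolding power2_eq_square by algebra
    have "((\<lambda>x. l * cos (th x) / sin (th x)) has_real_derivative
            (l * (- sin (th x) * l) * sin (th x) - l * cos (th x) * (cos (th x) * l)) / (sin (th x) * sin (th x)))
            (at x)"
      unfolding th_def using sin_pos[OF x] by (auto intro!: derivative_eq_intros simp: th_def)
    then show "((\<lambda>x. l * cos (th x) / sin (th x)) has_real_derivative - (l\<^sup>2) / (sin (th x))\<^sup>2)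
                 (at x within {0..1})"
      unfolding num by (simp add: power2_eq_square has_field_derivative_at_within)
  qed
  show "\<forall>x\<in>{0..1}. - (l\<^sup>2) / (sin (th x))\<^sup>2 = - ((pi / (1 + 2 * eta))\<^sup>2) - (l * cos (th x) / sin (th x))\<^sup>2"
  proof
    fix x :: real assume x: "x \<in> {0..1}"
    have "sin (th x) \<noteq> 0" using sin_pos[OF x] by simp
    then show "- (l\<^sup>2) / (sin (th x))\<^sup>2 = - ((pi / (1 + 2 * eta))\<^sup>2) - (l * cos (th x) / sin (th x))\<^sup>2"
      using sin_cos_squared_add[of "th x"] unfolding l_def[symmetric]
      by (simp add: field_simps power2_eq_square) (simp add: algebra_simps flip: distrib_left)
  qed
qed

lemma wirtinger_inequality:
  fixes f f' :: "real \<Rightarrow> real"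
  assumes "\<forall>x\<in>{0..1}. (f has_real_derivative f' x) (at x within {0..1})"
   and "continuous_on {0..1} f'" and "f 0 = 0" and "f 1 = 0"
  shows "pi\<^sup>2 * integral {0..1} (\<lambda>x. (f x)\<^sup>2) \<le> integral {0..1} (\<lambda>x. (f' x)\<^sup>2)"
proof -
  have lim: "((\<lambda>eta. (pi / (1 + 2 * eta))\<^sup>2 * integral {0..1} (\<lambda>x. (f x)\<^sup>2))
          \<longlongrightarrow> (pi / (1 + 2 * 0))\<^sup>2 * integral {0..1} (\<lambda>x. (f x)\<^sup>2)) (at_right 0)"
    by (intro tendsto_intros) auto
  have "\<forall>\<^sub>F eta in at_right 0.
      (pi / (1 + 2 * eta))\<^sup>2 * integral {0..1} (\<lambda>x. (f x)\<^sup>2) \<le> integral {0..1} (\<lambda>x. (f' x)\<^sup>2)"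
    using eventually_at_right_less[of 0]
    by eventually_elim (rule wirtinger_inequality_slack[OF assms], simp)
  then have "(pi / (1 + 2 * 0))\<^sup>2 * integral {0..1} (\<lambda>x. (f x)\<^sup>2) \<le> integral {0..1} (\<lambda>x. (f' x)\<^sup>2)"
    by (rule tendsto_upperbound[OF lim]) simp
  then show ?thesis by simp
qed

section \<open>The Dirichlet problem for \<open>f'' = h\<close>\<close>

text \<open>\<open>dirichlet_green h\<close> solves \<open>f'' = h\<close>, \<open>f 0 = f 1 = 0\<close>: it is \<open>\<integral>\<^sub>0\<^sup>1 g(x,y) h(y) dy\<close> with
  Green's function \<open>g(x,y) = -y(1-x)\<close> for \<open>y \<le> x\<close> and \<open>g(x,y) = -x(1-y)\<close> for \<open>x \<le> y\<close>.\<close>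

definition dirichlet_green :: "(real \<Rightarrow> real) \<Rightarrow> real \<Rightarrow> real" where
  "dirichlet_green h x =
     - (1 - x) * integral {0..x} (\<lambda>y. y * h y)
     - x * (integral {0..1} (\<lambda>y. (1 - y) * h y) - integral {0..x} (\<lambda>y. (1 - y) * h y))"

definition dirichlet_green_deriv :: "(real \<Rightarrow> real) \<Rightarrow> real \<Rightarrow> real" where
  "dirichlet_green_deriv h x =
     integral {0..x} (\<lambda>y. y * h y)
     - (integral {0..1} (\<lambda>y. (1 - y) * h y) - integral {0..x} (\<lambda>y. (1 - y) * h y))"

context
  fixes h :: "real \<Rightarrow> real"
  assumes h: "continuous_on {0..1} h"
begin

lemma has_real_derivative_green_integrals:
  assumes "x \<in> {0..1}"
  shows "((\<lambda>x. integral {0..x} (\<lambda>y. y * h y)) has_real_derivative x * h x) (at x within {0..1})"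
    and "((\<lambda>x. integral {0..x} (\<lambda>y. (1 - y) * h y)) has_real_derivative (1 - x) * h x) (at x within {0..1})"
  using assms by (auto intro!: integral_has_real_derivative continuous_intros h)

lemma has_real_derivative_dirichlet_green:
  "\<forall>x\<in>{0..1}. (dirichlet_green h has_real_derivative dirichlet_green_deriv h x) (at x within {0..1})"
proof
  fix x :: real assume "x \<in> {0..1}"
  note d = has_real_derivative_green_integrals[OF this]
  show "(dirichlet_green h has_real_derivative dirichlet_green_deriv h x) (at x within {0..1})"
    unfolding dirichlet_green_def[abs_def] dirichlet_green_deriv_def
    by (rule derivative_eq_intros d | simp)+ (simp add: algebra_simps)
qed

lemma has_real_derivative_dirichlet_green_deriv:
  "\<forall>x\<in>{0..1}. (dirichlet_green_deriv h has_real_derivative h x) (at x within {0..1})"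
proof
  fix x :: real assume "x \<in> {0..1}"
  note d = has_real_derivative_green_integrals[OF this]
  show "(dirichlet_green_deriv h has_real_derivative h x) (at x within {0..1})"
    unfolding dirichlet_green_deriv_def[abs_def]
    by (rule derivative_eq_intros d | simp)+ (simp add: algebra_simps)
qed

lemma continuous_on_dirichlet_green_deriv: "continuous_on {0..1} (dirichlet_green_deriv h)"
  using has_real_derivative_dirichlet_green_deriv by (rule continuous_on_if_has_real_derivative_within)

lemma dirichlet_green_boundary: "dirichlet_green h 0 = 0" "dirichlet_green h 1 = 0"
  unfolding dirichlet_green_def by simp_all

end

lemma eq_zero_if_second_deriv_zero:
  fixes p p' :: "real \<Rightarrow> real"
  assumes d1: "\<forall>x\<in>{0..1}. (p has_real_derivative p' x) (at x within {0..1})"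
    and d2: "\<forall>x\<in>{0..1}. (p' has_real_derivative 0) (at x within {0..1})"
    and p0: "p 0 = 0" and p1: "p 1 = 0" and x: "x \<in> {0..1}"
  shows "p x = 0"
proof -
  obtain c where c: "\<forall>x\<in>{0..1}. p' x = c"
    using has_field_derivative_zero_constant[of "{0..1}" p'] d2 by auto
  have "\<forall>x\<in>{0..1}. ((\<lambda>x. p x - c * x) has_real_derivative 0) (at x within {0..1})"
    using d1 c by (auto intro!: derivative_eq_intros)
  then obtain e where e: "\<forall>x\<in>{0..1}. p x - c * x = e"
    using has_field_derivative_zero_constant[of "{0..1}" "\<lambda>x. p x - c * x"] by auto
  have "e = 0" using e p0 by force
  moreover from this have "c = 0" using e p1 by force
  ultimately show ?thesis using e x by auto
qed

lemma eq_dirichlet_green: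
  fixes f f' h :: "real \<Rightarrow> real"
  assumes d1: "\<forall>x\<in>{0..1}. (f has_real_derivative f' x) (at x within {0..1})"
    and d2: "\<forall>x\<in>{0..1}. (f' has_real_derivative h x) (at x within {0..1})"
    and h: "continuous_on {0..1} h" and f0: "f 0 = 0" and f1: "f 1 = 0" and x: "x \<in> {0..1}"
  shows "f x = dirichlet_green h x"
proof -
  have "f x - dirichlet_green h x = 0"
  proof (rule eq_zero_if_second_deriv_zero[where p="\<lambda>x. f x - dirichlet_green h x"
                                            and p'="\<lambda>x. f' x - dirichlet_green_deriv h x"])
    show "\<forall>x\<in>{0..1}. ((\<lambda>x. f x - dirichlet_green h x) has_real_derivative
                        f' x - dirichlet_green_deriv h x) (at x within {0..1})"
      using d1 has_real_derivative_dirichlet_green[OF h] by (auto intro!: derivative_eq_intros)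
    show "\<forall>x\<in>{0..1}. ((\<lambda>x. f' x - dirichlet_green_deriv h x) has_real_derivative 0) (at x within {0..1})"
      using d2 has_real_derivative_dirichlet_green_deriv[OF h] by (auto intro!: derivative_eq_intros)
  qed (use f0 f1 x dirichlet_green_boundary[OF h] in auto)
  then show ?thesis by simp
qed

lemma leibniz_rule_atLeast:
  fixes f f' :: "real \<Rightarrow> real \<Rightarrow> real"
  assumes d: "\<forall>x\<in>{a..b}. \<forall>t\<in>{t0..}. ((\<lambda>s. f x s) has_real_derivative f' x t) (at t within {t0..})"
    and c: "continuous_on ({t0..} \<times> {a..b}) (\<lambda>p. f' (snd p) (fst p))"
    and ci: "\<forall>t\<in>{t0..}. continuous_on {a..b} (\<lambda>x. f x t)"
    and t: "t \<in> {t0..}"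
  shows "((\<lambda>s. integral {a..b} (\<lambda>x. f x s)) has_real_derivative integral {a..b} (\<lambda>x. f' x t))
           (at t within {t0..})"
proof -
  have "((\<lambda>s. integral (cbox a b) (\<lambda>x. f x s)) has_field_derivative integral (cbox a b) (\<lambda>x. f' x t))
          (at t within {t0..})"
  proof (rule leibniz_rule_field_derivative[where f="\<lambda>s x. f x s" and fx="\<lambda>s x. f' x s"])
    show "\<And>s x. s \<in> {t0..} \<Longrightarrow> x \<in> cbox a b \<Longrightarrow>
            ((\<lambda>s. f x s) has_field_derivative f' x s) (at s within {t0..})"
      using d by auto
    show "\<And>s. s \<in> {t0..} \<Longrightarrow> (\<lambda>x. f x s) integrable_on cbox a b"
      using ci by (auto intro!: integrable_continuous_interval)
    show "continuous_on ({t0..} \<times> cbox a b) (\<lambda>(s, x). f' x s)"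
      using c by (simp add: case_prod_beta)
  qed (use t in auto)
  then show ?thesis by simp
qed

lemma continuous_on_swap_args:
  fixes f :: "real \<Rightarrow> real \<Rightarrow> real"
  assumes "continuous_on (A \<times> B) (\<lambda>(x, t). f x t)"
  shows "continuous_on (B \<times> A) (\<lambda>p. f (snd p) (fst p))"
proof -
  have "continuous_on (B \<times> A) ((\<lambda>(x, t). f x t) \<circ> (\<lambda>p. (snd p, fst p)))"
    by (rule continuous_on_compose) (auto intro!: continuous_intros continuous_on_subset[OF assms])
  then show ?thesis by (simp add: o_def)
qed

lemma continuous_on_slice:
  fixes f :: "real \<Rightarrow> real \<Rightarrow> real"
  assumes "continuous_on (A \<times> B) (\<lambda>(x, t). f x t)" "t \<in> B"
  shows "continuous_on A (\<lambda>x. f x t)"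
proof -
  have "continuous_on A ((\<lambda>(x, t). f x t) \<circ> (\<lambda>x. (x, t)))"
    by (rule continuous_on_compose)
      (use assms in \<open>auto intro!: continuous_intros continuous_on_subset[OF assms(1)]\<close>)
  then show ?thesis by (simp add: o_def)
qed

lemma has_real_derivative_transform_on:
  fixes f g :: "real \<Rightarrow> real"
  assumes "\<forall>y\<in>S. f y = g y" "x \<in> S" "(f has_real_derivative D) (at x within S)"
  shows "(g has_real_derivative D) (at x within S)"
  by (rule has_field_derivative_transform_within[OF assms(3) zero_less_one assms(2)]) (use assms(1) in auto)

lemma has_real_derivative_unique_atLeast:
  fixes f :: "real \<Rightarrow> real"
  assumes "t0 \<le> t" and "(f has_real_derivative D1) (at t within {t0..})"
    and "(f has_real_derivative D2) (at t within {t0..})"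
  shows "D1 = D2"
proof -
  have "at_right t \<le> at t within {t0..}" using assms(1) by (intro at_le) auto
  then have "at t within {t0..} \<noteq> bot"
    using trivial_limit_at_right_real[of t] by (metis bot.extremum_uniqueI)
  then show ?thesis
    using vector_derivative_unique_within assms(2,3)
    by (simp add: has_real_derivative_iff_has_vector_derivative)
qed

lemma exp_decay_if_deriv_le:
  fixes g g' :: "real \<Rightarrow> real"
  assumes d: "\<forall>t\<in>{t0..}. (g has_real_derivative g' t) (at t within {t0..})"
    and le: "\<forall>t>t0. g' t \<le> - c * g t"
    and t: "t \<ge> t0"
  shows "g t \<le> exp (- c * (t - t0)) * g t0"
proof (cases "t = t0")
  case False
  with t have tt: "t0 < t" by simp
  define h where "h s = exp (c * (s - t0)) * g s" for s
  define h' where "h' s = exp (c * (s - t0)) * (c * g s + g' s)" for s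
  have "(h has_derivative (\<lambda>y. h' s * y)) (at s within {t0..t})" if "t0 \<le> s" "s \<le> t" for s
  proof -
    have "(h has_real_derivative h' s) (at s within {t0..})"
      unfolding h_def h'_def using d that by (auto intro!: derivative_eq_intros simp: algebra_simps)
    then have "(h has_real_derivative h' s) (at s within {t0..t})" by (rule DERIV_subset) auto
    then show ?thesis by (simp add: has_field_derivative_def)
  qed
  then obtain z where z: "z \<in> {t0<..<t}" "h t - h t0 = h' z * (t - t0)"
    using mvt_simple[OF tt, of h "\<lambda>s y. h' s * y"] by auto
  have "c * g z + g' z \<le> 0" using le z(1) by auto
  then have "h' z * (t - t0) \<le> 0"
    unfolding h'_def using tt by (simp add: mult_nonneg_nonpos mult_nonpos_nonneg)
  then have "exp (c * (t - t0)) * g t \<le> g t0" using z unfolding h_def by simp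
  then have "exp (- c * (t - t0)) * (exp (c * (t - t0)) * g t) \<le> exp (- c * (t - t0)) * g t0"
    by (rule mult_left_mono) simp
  then show ?thesis by (simp add: mult.assoc[symmetric] exp_add[symmetric])
qed simp

lemma exists_primitive:
  fixes F :: "real \<Rightarrow> real"
  assumes c: "continuous_on UNIV F"
  obtains G where "G 0 = 0" "\<forall>s. (G has_real_derivative F s) (at s)"
proof -
  define G where "G s = integral {0..s} F - integral {s..0} F" for s
  have "(G has_real_derivative F s0) (at s0)" for s0
  proof -
    define N where "N = \<bar>s0\<bar> + 1"
    have N: "-N < s0" "s0 < N" "N > 0" unfolding N_def by auto
    have eq: "integral {-N..s} F - integral {-N..0} F = G s" if "s \<in> {-N<..<N}" for s
    proof (cases "s \<ge> 0")
      case True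
      have "integral {-N..0} F + integral {0..s} F = integral {-N..s} F"
        by (rule Henstock_Kurzweil_Integration.integral_combine)
          (use True N in \<open>auto intro!: integrable_continuous_interval continuous_on_subset[OF c]\<close>)
      moreover have "integral {s..0} F = 0" using True by (cases "s = 0") auto
      ultimately show ?thesis unfolding G_def by simp
    next
      case False
      have "integral {-N..s} F + integral {s..0} F = integral {-N..0} F"
        by (rule Henstock_Kurzweil_Integration.integral_combine)
          (use False that in \<open>auto intro!: integrable_continuous_interval continuous_on_subset[OF c]\<close>)
      moreover have "integral {0..s} F = 0" using False by simp
      ultimately show ?thesis unfolding G_def by simp
    qed
    have "((\<lambda>s. integral {-N..s} F - integral {-N..0} F) has_real_derivative F s0) (at s0 within {-N..N})"
      using integral_has_real_derivative[of "-N" N F s0] N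
      by (auto intro!: derivative_eq_intros continuous_on_subset[OF c])
    then have "((\<lambda>s. integral {-N..s} F - integral {-N..0} F) has_real_derivative F s0) (at s0)"
      using N by (subst (asm) at_within_interior) auto
    then show ?thesis
      by (rule has_field_derivative_transform_within_open[where S="{-N<..<N}"]) (use N eq in auto)
  qed
  moreover have "G 0 = 0" unfolding G_def by simp
  ultimately show ?thesis using that by blast
qed

lemma integral_lincomb2:
  fixes f g :: "real \<Rightarrow> real"
  assumes "continuous_on {a..b} f" "continuous_on {a..b} g"
  shows "integral {a..b} (\<lambda>x. c1 * f x + c2 * g x) = c1 * integral {a..b} f + c2 * integral {a..b} g"
proof -
  have "((\<lambda>x. c1 *\<^sub>R f x + c2 *\<^sub>R g x) has_integral
           c1 *\<^sub>R integral {a..b} f + c2 *\<^sub>R integral {a..b} g) {a..b}"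
    using assms by (intro has_integral_add has_integral_cmul integrable_integral integrable_continuous_interval)
  then show ?thesis by (simp add: integral_unique)
qed

lemma integral_lincomb4:
  fixes f g h k :: "real \<Rightarrow> real"
  assumes "continuous_on {a..b} f" "continuous_on {a..b} g" "continuous_on {a..b} h" "continuous_on {a..b} k"
  shows "integral {a..b} (\<lambda>x. c1 * f x + c2 * g x + c3 * h x + c4 * k x) =
    c1 * integral {a..b} f + c2 * integral {a..b} g + c3 * integral {a..b} h + c4 * integral {a..b} k"
proof -
  have "((\<lambda>x. c1 *\<^sub>R f x + c2 *\<^sub>R g x + c3 *\<^sub>R h x + c4 *\<^sub>R k x) has_integral
      c1 *\<^sub>R integral {a..b} f + c2 *\<^sub>R integral {a..b} g + c3 *\<^sub>R integral {a..b} h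
        + c4 *\<^sub>R integral {a..b} k) {a..b}"
    using assms by (intro has_integral_add has_integral_cmul integrable_integral integrable_continuous_interval)
  then show ?thesis by (simp add: integral_unique)
qed

lemma continuous_le_on_closed_interval:
  fixes f g :: "real \<Rightarrow> real"
  assumes "a < b" "continuous_on {a..b} f" "continuous_on {a..b} g"
    and "\<forall>x\<in>{a<..<b}. f x \<le> g x" "x \<in> {a..b}"
  shows "f x \<le> g x"
proof -
  have "continuous_on (closure {a<..<b}) (\<lambda>x. g x - f x)"
    using assms by (auto intro!: continuous_intros)
  then have "g x - f x \<ge> 0"
    by (rule continuous_ge_on_closure) (use assms in auto)
  then show ?thesis by simp
qed

lemma square_le_bound_mult_excess:
  fixes a a0 M w :: real
  assumes "a0 \<le> a" "a \<le> M" "M \<ge> 0"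
  shows "(a * w)\<^sup>2 \<le> (M + \<bar>a0\<bar>) * (a * w * w - a0 * w\<^sup>2 + \<bar>a0\<bar> * w\<^sup>2)"
proof -
  have "\<bar>a\<bar> * \<bar>a\<bar> \<le> (M + \<bar>a0\<bar>) * (a - a0 + \<bar>a0\<bar>)"
    using assms by (intro mult_mono) auto
  then have "a\<^sup>2 * w\<^sup>2 \<le> (M + \<bar>a0\<bar>) * (a - a0 + \<bar>a0\<bar>) * w\<^sup>2"
    by (intro mult_right_mono) (auto simp: power2_eq_square abs_mult_self_eq)
  then show ?thesis by (simp add: power2_eq_square algebra_simps)
qed

lemma square_sum3_le: "(p + q + r)\<^sup>2 \<le> 3 * (p\<^sup>2 + q\<^sup>2 + r\<^sup>2)" for p q r :: real
proof -
  have "0 \<le> (p - q)\<^sup>2 + (q - r)\<^sup>2 + (p - r)\<^sup>2" by simp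
  then show ?thesis by (simp add: power2_eq_square algebra_simps)
qed

lemma mult_le_square_if_deriv_le:
  fixes F F' :: "real \<Rightarrow> real"
  assumes d: "\<forall>s. (F has_real_derivative F' s) (at s)" and le: "\<forall>s. F' s \<le> K" and F0: "F 0 = 0"
  shows "s * F s \<le> K * s\<^sup>2"
proof -
  define phi where "phi s = K * s - F s" for s
  have phi_mono: "phi x \<le> phi y" if "x \<le> y" for x y
  proof (rule DERIV_nonneg_imp_nondecreasing[where f=phi, OF that])
    fix z
    show "\<exists>y. DERIV phi z :> y \<and> 0 \<le> y"
      using d le unfolding phi_def by (auto intro!: exI[of _ "K - F' z"] derivative_eq_intros)
  qed
  have "phi 0 = 0" unfolding phi_def using F0 by simp
  show ?thesis
  proof (cases "s \<ge> 0")
    case True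
    then have "F s \<le> K * s" using phi_mono[OF True] \<open>phi 0 = 0\<close> unfolding phi_def by simp
    then have "s * F s \<le> s * (K * s)" by (rule mult_left_mono[OF _ True])
    then show ?thesis by (simp add: power2_eq_square algebra_simps)
  next
    case False
    then have "K * s \<le> F s" using phi_mono[of s 0] \<open>phi 0 = 0\<close> unfolding phi_def by simp
    then have "s * F s \<le> s * (K * s)" using False by (intro mult_left_mono_neg) auto
    then show ?thesis by (simp add: power2_eq_square algebra_simps)
  qed
qed

lemma primitive_le_if_deriv_le:
  fixes F F' G :: "real \<Rightarrow> real"
  assumes d: "\<forall>s. (F has_real_derivative F' s) (at s)" and le: "\<forall>s. F' s \<le> K" and F0: "F 0 = 0"
    and dG: "\<forall>s. (G has_real_derivative F s) (at s)" and G0: "G 0 = 0"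
  shows "G s \<le> K * s\<^sup>2 / 2"
proof -
  define psi where "psi s = K * s\<^sup>2 / 2 - G s" for s
  have dpsi: "DERIV psi x :> K * x - F x" for x
    unfolding psi_def using dG by (auto intro!: derivative_eq_intros)
  have sign: "x * (K * x - F x) \<ge> 0" for x
    using mult_le_square_if_deriv_le[OF d le F0, of x] by (simp add: power2_eq_square algebra_simps)
  have "psi 0 \<le> psi s"
  proof (cases "s \<ge> 0")
    case True
    show ?thesis
    proof (rule DERIV_nonneg_imp_nondecreasing[where f=psi, OF True])
      fix x assume "0 \<le> x" "x \<le> s"
      with sign[of x] F0 have "K * x - F x \<ge> 0" by (cases "x = 0") (auto simp: zero_le_mult_iff)
      with dpsi show "\<exists>y. DERIV psi x :> y \<and> 0 \<le> y" by blast
    qed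
  next
    case False
    show ?thesis
    proof (rule DERIV_nonpos_imp_nonincreasing[where f=psi])
      fix x assume "s \<le> x" "x \<le> 0"
      with sign[of x] F0 have "K * x - F x \<le> 0" by (cases "x = 0") (auto simp: zero_le_mult_iff)
      with dpsi show "\<exists>y. DERIV psi x :> y \<and> y \<le> 0" by blast
    qed (use False in auto)
  qed
  then show ?thesis unfolding psi_def using G0 by simp
qed

lemma abs_le_if_deriv_bounded:
  fixes F F' :: "real \<Rightarrow> real"
  assumes d: "\<forall>s. (F has_real_derivative F' s) (at s)" and F0: "F 0 = 0"
    and L: "\<forall>r. \<bar>r\<bar> \<le> M \<longrightarrow> \<bar>F' r\<bar> \<le> L" and s: "\<bar>s\<bar> \<le> M"
  shows "\<bar>F s\<bar> \<le> L * \<bar>s\<bar>"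
proof -
  consider "s = 0" | "0 < s" | "s < 0" by linarith
  then show ?thesis
  proof cases
    case 2
    then obtain z where z: "0 < z" "z < s" "F s - F 0 = (s - 0) * F' z"
      using MVT2[of 0 s F F'] d by auto
    have "\<bar>F' z\<bar> \<le> L" using L z s by auto
    then show ?thesis using z F0 by (simp add: abs_mult mult.commute mult_left_mono)
  next
    case 3
    then obtain z where z: "s < z" "z < 0" "F 0 - F s = (0 - s) * F' z"
      using MVT2[of s 0 F F'] d by auto
    have "\<bar>F' z\<bar> \<le> L" using L z s by auto
    then show ?thesis using z F0 by (simp add: abs_mult mult.commute mult_left_mono)
  qed (use F0 in simp)
qed

lemma primitive_ge_if_deriv_bounded:
  fixes F F' G :: "real \<Rightarrow> real"
  assumes d: "\<forall>s. (F has_real_derivative F' s) (at s)" and F0: "F 0 = 0"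
    and L: "\<forall>r. \<bar>r\<bar> \<le> M \<longrightarrow> \<bar>F' r\<bar> \<le> L"
    and dG: "\<forall>s. (G has_real_derivative F s) (at s)" and G0: "G 0 = 0" and s: "\<bar>s\<bar> \<le> M"
  shows "- L * s\<^sup>2 / 2 \<le> G s"
proof -
  define psi where "psi s = G s + L * s\<^sup>2 / 2" for s
  have dpsi: "DERIV psi x :> F x + L * x" for x
    unfolding psi_def using dG by (auto intro!: derivative_eq_intros)
  have F_le: "\<bar>F x\<bar> \<le> L * \<bar>x\<bar>" if "\<bar>x\<bar> \<le> M" for x
    by (rule abs_le_if_deriv_bounded[OF d F0 L that])
  have "psi 0 \<le> psi s"
  proof (cases "s \<ge> 0")
    case True
    show ?thesis
    proof (rule DERIV_nonneg_imp_nondecreasing[where f=psi, OF True])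
      fix x assume "0 \<le> x" "x \<le> s"
      then have "\<bar>F x\<bar> \<le> L * x" using F_le[of x] s by auto
      with dpsi show "\<exists>y. DERIV psi x :> y \<and> 0 \<le> y" by (intro exI[of _ "F x + L * x"]) auto
    qed
  next
    case False
    show ?thesis
    proof (rule DERIV_nonpos_imp_nonincreasing[where f=psi])
      fix x assume "s \<le> x" "x \<le> 0"
      then have "\<bar>F x\<bar> \<le> L * (- x)" using F_le[of x] s by auto
      with dpsi show "\<exists>y. DERIV psi x :> y \<and> y \<le> 0" by (intro exI[of _ "F x + L * x"]) auto
    qed (use False in auto)
  qed
  then show ?thesis unfolding psi_def using G0 by simp
qed

definition abs_bound :: "(real \<Rightarrow> real) \<Rightarrow> real \<Rightarrow> real" where
  "abs_bound f M = Sup ((\<lambda>r. \<bar>f r\<bar>) ` {-M..M})"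

lemma abs_le_abs_bound:
    "continuous_on UNIV f \<Longrightarrow> M \<ge> 0 \<Longrightarrow> \<forall>r. \<bar>r\<bar> \<le> M \<longrightarrow> \<bar>f r\<bar> \<le> abs_bound f M"
  and abs_bound_nonneg: "continuous_on UNIV f \<Longrightarrow> M \<ge> 0 \<Longrightarrow> abs_bound f M \<ge> 0"
proof -
  assume assms: "continuous_on UNIV f" "M \<ge> 0"
  have bdd: "bdd_above ((\<lambda>r. \<bar>f r\<bar>) ` {-M..M})"
    by (intro bounded_imp_bdd_above compact_imp_bounded compact_continuous_image)
      (auto intro!: continuous_intros continuous_on_subset[OF assms(1)])
  show "\<forall>r. \<bar>r\<bar> \<le> M \<longrightarrow> \<bar>f r\<bar> \<le> abs_bound f M"
  proof (intro allI impI)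
    fix r :: real assume "\<bar>r\<bar> \<le> M"
    then have "r \<in> {-M..M}" by auto
    then show "\<bar>f r\<bar> \<le> abs_bound f M" unfolding abs_bound_def by (intro cSup_upper bdd imageI)
  qed
  then show "abs_bound f M \<ge> 0"
    using assms(2) abs_ge_zero[of "f 0"] by (metis abs_zero order_trans)
qed

section \<open>The damped wave equation and its constants\<close>

locale damped_wave =
  fixes eps K A A' tau :: real
    and F F' :: "real \<Rightarrow> real"
    and a :: "real \<Rightarrow> real \<Rightarrow> real \<Rightarrow> real \<Rightarrow> real \<Rightarrow> real \<Rightarrow> real"
  assumes eps_pos: "eps > 0"
    and F_deriv: "\<forall>s. (F has_real_derivative F' s) (at s)"
    and F'_cont: "continuous_on UNIV F'"
    and F0: "F 0 = 0"
    and K_pos: "K > 0" and F'_le: "\<forall>s. F' s \<le> K" and K_less: "K < pi\<^sup>2"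
    and a_bdd_below: "bdd_below ((\<lambda>(x, t, p, q, r, s). a x t p q r s) `
                   ({0<..<1} \<times> {0..} \<times> UNIV \<times> UNIV \<times> UNIV \<times> UNIV))"
    and nu_pos: "eps * pi\<^sup>2 + Inf ((\<lambda>(x, t, p, q, r, s). a x t p q r s) `
                   ({0<..<1} \<times> {0..} \<times> UNIV \<times> UNIV \<times> UNIV \<times> UNIV)) > 0"
    and tau: "0 \<le> tau" "tau < 2"
    and A_pos: "A > 0" and A'_nonneg: "A' \<ge> 0"
    and a_growth: "\<forall>phi phix phixx psi. in_Gamma phi phix phixx psi \<longrightarrow>
                     (\<forall>x\<in>{0<..<1}. \<forall>t\<ge>0.
                        a x t (phi x) (phix x) (phixx x) (psi x)
                          \<le> A * rpow (dG phi phix phixx psi) tau + A')"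
begin

definition "a_inf = Inf ((\<lambda>(x, t, p, q, r, s). a x t p q r s) `
                          ({0<..<1} \<times> {0..} \<times> UNIV \<times> UNIV \<times> UNIV \<times> UNIV))"
definition "nu = eps * pi\<^sup>2 + a_inf"
definition "kappa = min eps (nu / pi\<^sup>2)"
definition "k_F = 1 - K / pi\<^sup>2"
definition "beta = 1/2 + tau / 4"
definition "G = (SOME G. G 0 = 0 \<and> (\<forall>s. (G has_real_derivative F s) (at s)))"

lemma F_cont: "continuous_on UNIV F"
  using F_deriv by (meson DERIV_continuous continuous_at_imp_continuous_on)

lemma G0: "G 0 = 0" and G_deriv: "\<forall>s. (G has_real_derivative F s) (at s)"
proof -
  obtain G' where "G' 0 = 0" "\<forall>s. (G' has_real_derivative F s) (at s)"
    using exists_primitive[OF F_cont] .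
  then have "G 0 = 0 \<and> (\<forall>s. (G has_real_derivative F s) (at s))"
    unfolding G_def by (rule someI[where x=G', OF conjI])
  then show "G 0 = 0" "\<forall>s. (G has_real_derivative F s) (at s)" by blast+
qed

lemma G_cont: "continuous_on UNIV G"
  using G_deriv by (meson DERIV_continuous continuous_at_imp_continuous_on)

lemma a_inf_le: "x \<in> {0<..<1} \<Longrightarrow> t \<ge> 0 \<Longrightarrow> a_inf \<le> a x t p q r s"
  unfolding a_inf_def
  by (rule cInf_lower[OF _ a_bdd_below]) (rule image_eqI[where x="(x, t, p, q, r, s)"], auto)

lemma kappa_pos: "kappa > 0"
  unfolding kappa_def nu_def a_inf_def using eps_pos nu_pos by simp

lemma k_F_pos: "k_F > 0" and k_F_le_1: "k_F \<le> 1"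
  unfolding k_F_def using K_less K_pos by (auto simp: field_simps)

lemma beta_bounds: "1/2 \<le> beta" "beta < 1"
  unfolding beta_def using tau by auto

text \<open>The constants below depend on the data and on the bound \<open>\<alpha>\<close> of the initial distance only,
  never on the solution; each argument of a \<open>min\<close> in \<open>delta\<close> and \<open>gamma\<close> is one smallness
  condition needed in \<open>V'_le\<close>.\<close>

definition "energy_coeff \<alpha> = (1 + abs_bound F' \<alpha>) / 2"
definition "energy_bound \<alpha> = 2 * energy_coeff \<alpha> * \<alpha>\<^sup>2 / k_F"
definition "lip_F \<alpha> = abs_bound F' (sqrt (energy_bound \<alpha>))"
definition "dist_coeff \<alpha> = 3 * energy_bound \<alpha> + 2 * energy_bound \<alpha> / eps\<^sup>2 + 2 / eps\<^sup>2 + 1"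
definition "damping_coeff \<alpha> = A * dist_coeff \<alpha> powr (tau / 2) + A' + \<bar>a_inf\<bar>"
definition "Y_source \<alpha> = 2 * sqrt (energy_bound \<alpha>) * (1 / eps + lip_F \<alpha>)
                           + damping_coeff \<alpha> + \<bar>a_inf\<bar> * energy_bound \<alpha>"
definition "Z_offset \<alpha> = energy_coeff \<alpha> * \<alpha>\<^sup>2 + 1 + eps * Y_source \<alpha> / 2"
definition "Z_bound \<alpha> = max (1 + 2 * (eps\<^sup>2 + 1) * \<alpha>\<^sup>2 + energy_coeff \<alpha> * \<alpha>\<^sup>2) (Z_offset \<alpha>)"
definition "Y_bound \<alpha> = Z_bound \<alpha> powr (1 / (1 - beta))"
definition "damping_bound \<alpha> = damping_coeff \<alpha> * Y_bound \<alpha> powr (tau / 2)"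
definition "delta \<alpha> = min (min (kappa * pi\<^sup>2 / (4 * (1 + damping_bound \<alpha> * \<bar>a_inf\<bar> / (2 * k_F * pi\<^sup>2))))
                          (k_F * pi\<^sup>2 / (2 * damping_bound \<alpha>))) (k_F / 2)"
definition "gamma \<alpha> = min (min (kappa * pi\<^sup>2 / (4 * (3 / eps + 3 * eps * damping_bound \<alpha> * \<bar>a_inf\<bar>)))
                               (1 / (12 * eps * damping_bound \<alpha>)))
                          (delta \<alpha> * k_F * pi\<^sup>2 / (12 * eps * ((lip_F \<alpha>)\<^sup>2 + 1)))"
definition "V_dissipation \<alpha> = min (min (kappa * pi\<^sup>2 / 2) (delta \<alpha> * k_F / 4)) (gamma \<alpha> / eps)"
definition "V_upper \<alpha> = 1 + lip_F \<alpha> + eps + gamma \<alpha>"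
definition "V_lower \<alpha> = min (k_F / 4) (gamma \<alpha>)"
definition "decay_factor \<alpha> = sqrt ((2 + 2 / eps\<^sup>2) * V_upper \<alpha> * (3 + 2 * eps\<^sup>2) / V_lower \<alpha>)"
definition "decay_rate \<alpha> = V_dissipation \<alpha> / V_upper \<alpha> / 2"

context
  fixes \<alpha> :: real
  assumes \<alpha>: "\<alpha> > 0"
begin

lemma abs_bound_F'_alpha: "\<forall>r. \<bar>r\<bar> \<le> \<alpha> \<longrightarrow> \<bar>F' r\<bar> \<le> abs_bound F' \<alpha>" "abs_bound F' \<alpha> \<ge> 0"
  using abs_le_abs_bound[OF F'_cont] abs_bound_nonneg[OF F'_cont] \<alpha> by auto

lemma energy_coeff_ge: "energy_coeff \<alpha> \<ge> 1/2" "energy_coeff \<alpha> \<ge> abs_bound F' \<alpha> / 2"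
  unfolding energy_coeff_def using abs_bound_F'_alpha by auto

lemma energy_bound_ge: "energy_bound \<alpha> \<ge> 2 * energy_coeff \<alpha> * \<alpha>\<^sup>2"
proof -
  have "2 * energy_coeff \<alpha> * \<alpha>\<^sup>2 \<ge> 0" using energy_coeff_ge by simp
  then show ?thesis
    unfolding energy_bound_def using k_F_pos k_F_le_1 by (simp add: le_divide_eq mult_left_le)
qed

lemma energy_bound_nonneg: "energy_bound \<alpha> \<ge> 0"
proof -
  have "0 \<le> 2 * energy_coeff \<alpha> * \<alpha>\<^sup>2" using energy_coeff_ge by simp
  then show ?thesis using energy_bound_ge by linarith
qed

lemma abs_bound_F'_lip: "\<forall>r. \<bar>r\<bar> \<le> sqrt (energy_bound \<alpha>) \<longrightarrow> \<bar>F' r\<bar> \<le> lip_F \<alpha>" "lip_F \<alpha> \<ge> 0"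
  using abs_le_abs_bound[OF F'_cont] abs_bound_nonneg[OF F'_cont] energy_bound_nonneg
  unfolding lip_F_def by auto

lemma dist_coeff_ge_1: "dist_coeff \<alpha> \<ge> 1"
  unfolding dist_coeff_def using energy_bound_nonneg by simp

lemma damping_coeff_pos: "damping_coeff \<alpha> > 0"
  unfolding damping_coeff_def using A_pos A'_nonneg dist_coeff_ge_1
  by (simp add: add_pos_nonneg)

lemma Y_source_nonneg: "Y_source \<alpha> \<ge> 0"
  unfolding Y_source_def using abs_bound_F'_lip(2) eps_pos energy_bound_nonneg damping_coeff_pos
  by simp

lemma damping_bound_pos: "damping_bound \<alpha> > 0"
proof -
  have "Z_offset \<alpha> \<ge> 1"
    unfolding Z_offset_def using energy_coeff_ge Y_source_nonneg eps_pos by simp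
  then have "Z_bound \<alpha> > 0" unfolding Z_bound_def by simp
  then show ?thesis unfolding damping_bound_def Y_bound_def using damping_coeff_pos by simp
qed

lemma delta_pos: "delta \<alpha> > 0"
proof -
  have "1 + damping_bound \<alpha> * \<bar>a_inf\<bar> / (2 * k_F * pi\<^sup>2) > 0"
    using damping_bound_pos k_F_pos by (simp add: add_pos_nonneg)
  then show ?thesis
    unfolding delta_def min_less_iff_conj using kappa_pos k_F_pos damping_bound_pos
    by (intro conjI divide_pos_pos mult_pos_pos) auto
qed

lemma gamma_pos: "gamma \<alpha> > 0"
proof -
  have "3 / eps + 3 * eps * damping_bound \<alpha> * \<bar>a_inf\<bar> > 0"
    using eps_pos damping_bound_pos by (simp add: add_pos_nonneg)
  moreover have "(lip_F \<alpha>)\<^sup>2 + 1 > 0" by (simp add: add_nonneg_pos)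
  ultimately show ?thesis
    unfolding gamma_def min_less_iff_conj using kappa_pos eps_pos damping_bound_pos delta_pos k_F_pos
    by (auto intro!: divide_pos_pos mult_pos_pos)
qed

lemma delta_le:
  "delta \<alpha> \<le> k_F / 2"
  "delta \<alpha> * (1 + damping_bound \<alpha> * \<bar>a_inf\<bar> / (2 * k_F * pi\<^sup>2)) \<le> kappa * pi\<^sup>2 / 4"
  "delta \<alpha> * damping_bound \<alpha> \<le> k_F * pi\<^sup>2 / 2"
proof -
  show "delta \<alpha> \<le> k_F / 2" unfolding delta_def by (rule min.cobounded2)
  have "delta \<alpha> \<le> kappa * pi\<^sup>2 / 4 / (1 + damping_bound \<alpha> * \<bar>a_inf\<bar> / (2 * k_F * pi\<^sup>2))"
    unfolding delta_def divide_divide_eq_left by (rule min.coboundedI1[OF min.cobounded1])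
  moreover have "1 + damping_bound \<alpha> * \<bar>a_inf\<bar> / (2 * k_F * pi\<^sup>2) > 0"
    using damping_bound_pos k_F_pos by (simp add: add_pos_nonneg)
  ultimately show "delta \<alpha> * (1 + damping_bound \<alpha> * \<bar>a_inf\<bar> / (2 * k_F * pi\<^sup>2)) \<le> kappa * pi\<^sup>2 / 4"
    by (simp only: pos_le_divide_eq)
  have "delta \<alpha> \<le> k_F * pi\<^sup>2 / 2 / damping_bound \<alpha>"
    unfolding delta_def divide_divide_eq_left by (rule min.coboundedI1[OF min.cobounded2])
  then show "delta \<alpha> * damping_bound \<alpha> \<le> k_F * pi\<^sup>2 / 2"
    using damping_bound_pos by (simp only: pos_le_divide_eq)
qed

lemma gamma_le:
  "gamma \<alpha> * (3 / eps + 3 * eps * damping_bound \<alpha> * \<bar>a_inf\<bar>) \<le> kappa * pi\<^sup>2 / 4"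
  "gamma \<alpha> * (eps * damping_bound \<alpha>) \<le> 1 / 12"
  "gamma \<alpha> * (eps * ((lip_F \<alpha>)\<^sup>2 + 1)) \<le> delta \<alpha> * k_F * pi\<^sup>2 / 12"
proof -
  have "gamma \<alpha> \<le> kappa * pi\<^sup>2 / 4 / (3 / eps + 3 * eps * damping_bound \<alpha> * \<bar>a_inf\<bar>)"
    unfolding gamma_def divide_divide_eq_left by (rule min.coboundedI1[OF min.cobounded1])
  moreover have "3 / eps + 3 * eps * damping_bound \<alpha> * \<bar>a_inf\<bar> > 0"
    using eps_pos damping_bound_pos by (simp add: add_pos_nonneg)
  ultimately show "gamma \<alpha> * (3 / eps + 3 * eps * damping_bound \<alpha> * \<bar>a_inf\<bar>) \<le> kappa * pi\<^sup>2 / 4"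
    by (simp only: pos_le_divide_eq)
  have "gamma \<alpha> \<le> 1 / 12 / (eps * damping_bound \<alpha>)"
    unfolding gamma_def divide_divide_eq_left mult.assoc by (rule min.coboundedI1[OF min.cobounded2])
  moreover have "eps * damping_bound \<alpha> > 0" using eps_pos damping_bound_pos by simp
  ultimately show "gamma \<alpha> * (eps * damping_bound \<alpha>) \<le> 1 / 12"
    by (simp only: pos_le_divide_eq)
  have "gamma \<alpha> \<le> delta \<alpha> * k_F * pi\<^sup>2 / 12 / (eps * ((lip_F \<alpha>)\<^sup>2 + 1))"
    unfolding gamma_def divide_divide_eq_left mult.assoc by (rule min.cobounded2)
  moreover have "eps * ((lip_F \<alpha>)\<^sup>2 + 1) > 0" using eps_pos by (simp add: add_nonneg_pos)
  ultimately show "gamma \<alpha> * (eps * ((lip_F \<alpha>)\<^sup>2 + 1)) \<le> delta \<alpha> * k_F * pi\<^sup>2 / 12"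
    by (simp only: pos_le_divide_eq)
qed

lemma damping_weight_le:
  "(delta \<alpha> / (2 * k_F * pi\<^sup>2) + 3 * gamma \<alpha> * eps) * damping_bound \<alpha> \<le> 1 / 2"
proof -
  have "delta \<alpha> / (2 * k_F * pi\<^sup>2) * damping_bound \<alpha> \<le> 1 / 4"
    using delta_le(3) k_F_pos by (simp add: field_simps)
  moreover have "3 * gamma \<alpha> * eps * damping_bound \<alpha> \<le> 1 / 4"
    using gamma_le(2) by (simp add: algebra_simps)
  ultimately show ?thesis by (simp add: algebra_simps)
qed

lemma ut2_weight_le:
  "delta \<alpha> + 3 * gamma \<alpha> / eps
     + (delta \<alpha> / (2 * k_F * pi\<^sup>2) + 3 * gamma \<alpha> * eps) * damping_bound \<alpha> * \<bar>a_inf\<bar> \<le> kappa * pi\<^sup>2 / 2"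
proof -
  have "delta \<alpha> + 3 * gamma \<alpha> / eps
          + (delta \<alpha> / (2 * k_F * pi\<^sup>2) + 3 * gamma \<alpha> * eps) * damping_bound \<alpha> * \<bar>a_inf\<bar>
        = delta \<alpha> * (1 + damping_bound \<alpha> * \<bar>a_inf\<bar> / (2 * k_F * pi\<^sup>2))
          + gamma \<alpha> * (3 / eps + 3 * eps * damping_bound \<alpha> * \<bar>a_inf\<bar>)"
    by (simp add: algebra_simps)
  then show ?thesis using delta_le(2) gamma_le(1) by linarith
qed

lemma ux2_weight_le: "3 * gamma \<alpha> * eps * (lip_F \<alpha>)\<^sup>2 / pi\<^sup>2 \<le> delta \<alpha> * k_F / 4"
proof -
  have "gamma \<alpha> * (eps * (lip_F \<alpha>)\<^sup>2) \<le> gamma \<alpha> * (eps * ((lip_F \<alpha>)\<^sup>2 + 1))"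
    using gamma_pos eps_pos by (intro mult_left_mono) auto
  then have "gamma \<alpha> * (eps * (lip_F \<alpha>)\<^sup>2) \<le> delta \<alpha> * k_F * pi\<^sup>2 / 12"
    using gamma_le(3) by linarith
  then show ?thesis by (simp add: field_simps)
qed

lemma V_consts_pos: "V_dissipation \<alpha> > 0" "V_upper \<alpha> > 0" "V_lower \<alpha> > 0"
  unfolding V_dissipation_def V_upper_def V_lower_def
  using kappa_pos k_F_pos delta_pos gamma_pos eps_pos abs_bound_F'_lip(2) by auto

lemma decay_factor_pos: "decay_factor \<alpha> > 0" and decay_rate_pos: "decay_rate \<alpha> > 0"
  unfolding decay_factor_def decay_rate_def using V_consts_pos eps_pos by (simp_all add: add_pos_nonneg)

end

end

section \<open>Solutions and energy identities\<close>

locale damped_wave_solution = damped_wave +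
  fixes t0 :: real
    and u ux uxx ut utt uxxt :: "real \<Rightarrow> real \<Rightarrow> real"
  assumes t0_nonneg: "t0 \<ge> 0"
    and cont: "\<forall>f \<in> {u, ux, uxx, ut, utt, uxxt}. continuous_on ({0..1} \<times> {t0..}) (\<lambda>(x, t). f x t)"
    and derivs: "\<forall>x\<in>{0..1}. \<forall>t\<in>{t0..}.
            ((\<lambda>y. u y t) has_real_derivative ux x t) (at x within {0..1})
          \<and> ((\<lambda>y. ux y t) has_real_derivative uxx x t) (at x within {0..1})
          \<and> ((\<lambda>s. u x s) has_real_derivative ut x t) (at t within {t0..})
          \<and> ((\<lambda>s. ut x s) has_real_derivative utt x t) (at t within {t0..})
          \<and> ((\<lambda>s. uxx x s) has_real_derivative uxxt x t) (at t within {t0..})"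
    and bc: "\<forall>t\<in>{t0..}. u 0 t = 0 \<and> u 1 t = 0"
    and pde: "\<forall>x\<in>{0<..<1}. \<forall>t\<in>{t0<..}.
            - eps * uxxt x t + utt x t - uxx x t
              = F (u x t) - a x t (u x t) (ux x t) (uxx x t) (ut x t) * ut x t"
begin

lemma joint_cont_u: "continuous_on ({t0..} \<times> {0..1}) (\<lambda>p. u (snd p) (fst p))"
  and joint_cont_ux: "continuous_on ({t0..} \<times> {0..1}) (\<lambda>p. ux (snd p) (fst p))"
  and joint_cont_uxx: "continuous_on ({t0..} \<times> {0..1}) (\<lambda>p. uxx (snd p) (fst p))"
  and joint_cont_ut: "continuous_on ({t0..} \<times> {0..1}) (\<lambda>p. ut (snd p) (fst p))"
  and joint_cont_utt: "continuous_on ({t0..} \<times> {0..1}) (\<lambda>p. utt (snd p) (fst p))"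
  and joint_cont_uxxt: "continuous_on ({t0..} \<times> {0..1}) (\<lambda>p. uxxt (snd p) (fst p))"
  using cont by (auto intro!: continuous_on_swap_args)

lemma joint_cont_Fu: "continuous_on ({t0..} \<times> {0..1}) (\<lambda>p. F (u (snd p) (fst p)))"
  and joint_cont_Gu: "continuous_on ({t0..} \<times> {0..1}) (\<lambda>p. G (u (snd p) (fst p)))"
  by (auto intro!: continuous_on_compose2[OF F_cont joint_cont_u] continuous_on_compose2[OF G_cont joint_cont_u])

lemmas joint_cont = joint_cont_u joint_cont_ux joint_cont_uxx joint_cont_ut joint_cont_utt joint_cont_uxxt
  joint_cont_Fu joint_cont_Gu

context
  fixes t :: real
  assumes t: "t \<ge> t0"
begin

lemma slice_cont_u: "continuous_on {0..1} (\<lambda>x. u x t)"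
  and slice_cont_ux: "continuous_on {0..1} (\<lambda>x. ux x t)"
  and slice_cont_uxx: "continuous_on {0..1} (\<lambda>x. uxx x t)"
  and slice_cont_ut: "continuous_on {0..1} (\<lambda>x. ut x t)"
  and slice_cont_utt: "continuous_on {0..1} (\<lambda>x. utt x t)"
  and slice_cont_uxxt: "continuous_on {0..1} (\<lambda>x. uxxt x t)"
  using cont t by (auto intro!: continuous_on_slice)

lemma slice_cont_Fu: "continuous_on {0..1} (\<lambda>x. F (u x t))"
  and slice_cont_Gu: "continuous_on {0..1} (\<lambda>x. G (u x t))"
  by (auto intro!: continuous_on_compose2[OF F_cont slice_cont_u] continuous_on_compose2[OF G_cont slice_cont_u])

end

lemmas slice_cont = slice_cont_u slice_cont_ux slice_cont_uxx slice_cont_ut slice_cont_utt slice_cont_uxxt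
  slice_cont_Fu slice_cont_Gu

lemma u_eq_green: "t \<ge> t0 \<Longrightarrow> x \<in> {0..1} \<Longrightarrow> u x t = dirichlet_green (\<lambda>y. uxx y t) x"
  using eq_dirichlet_green[of "\<lambda>y. u y t" "\<lambda>y. ux y t" "\<lambda>y. uxx y t"] derivs bc slice_cont_uxx by auto

lemma has_real_derivative_weighted_uxx:
  assumes x: "x \<in> {0..1}" and t: "t \<ge> t0" and c: "continuous_on {0..1} c"
  shows "((\<lambda>s. integral {0..x} (\<lambda>y. c y * uxx y s)) has_real_derivative integral {0..x} (\<lambda>y. c y * uxxt y t))
           (at t within {t0..})"
proof (rule leibniz_rule_atLeast)
  show "\<forall>y\<in>{0..x}. \<forall>t\<in>{t0..}. ((\<lambda>s. c y * uxx y s) has_real_derivative c y * uxxt y t) (at t within {t0..})"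
    using derivs x by (auto intro!: derivative_eq_intros)
  have sub: "{t0..} \<times> {0..x} \<subseteq> {t0..} \<times> {0..1}" using x by auto
  have "continuous_on ({t0..} \<times> {0..x}) (\<lambda>p. c (snd p))"
    by (rule continuous_on_compose2[OF c]) (use x in \<open>auto intro!: continuous_intros\<close>)
  then show "continuous_on ({t0..} \<times> {0..x}) (\<lambda>p. c (snd p) * uxxt (snd p) (fst p))"
    by (intro continuous_intros continuous_on_subset[OF joint_cont_uxxt sub])
  show "\<forall>t\<in>{t0..}. continuous_on {0..x} (\<lambda>y. c y * uxx y t)"
    using x by (auto intro!: continuous_intros continuous_on_subset[OF c] continuous_on_subset[OF slice_cont_uxx])
qed (use t in auto)

lemma has_real_derivative_green_uxx:
  assumes x: "x \<in> {0..1}" and t: "t \<ge> t0"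
  shows "((\<lambda>s. dirichlet_green (\<lambda>y. uxx y s) x) has_real_derivative dirichlet_green (\<lambda>y. uxxt y t) x)
           (at t within {t0..})"
proof -
  have "(1::real) \<in> {0..1}" by simp
  note d = has_real_derivative_weighted_uxx[OF x t] has_real_derivative_weighted_uxx[OF this t]
  show ?thesis
    unfolding dirichlet_green_def by (rule derivative_eq_intros d | (auto intro!: continuous_intros)[])+
qed

text \<open>The notion of solution provides no \<open>x\<close>-derivatives of \<open>ut\<close>; they come from differentiating
  \<open>u = dirichlet_green uxx\<close> in time, which gives \<open>ut = dirichlet_green uxxt\<close>.\<close>

lemma ut_eq_green: "t \<ge> t0 \<Longrightarrow> x \<in> {0..1} \<Longrightarrow> ut x t = dirichlet_green (\<lambda>y. uxxt y t) x"
proof -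
  assume t: "t \<ge> t0" and x: "x \<in> {0..1}"
  have "((\<lambda>s. u x s) has_real_derivative dirichlet_green (\<lambda>y. uxxt y t) x) (at t within {t0..})"
    by (rule has_real_derivative_transform_on[OF _ _ has_real_derivative_green_uxx[OF x t]])
      (use u_eq_green x t in auto)
  moreover have "((\<lambda>s. u x s) has_real_derivative ut x t) (at t within {t0..})" using derivs x t by auto
  ultimately show ?thesis using has_real_derivative_unique_atLeast[OF t] by metis
qed

definition utx :: "real \<Rightarrow> real \<Rightarrow> real" where "utx x t = dirichlet_green_deriv (\<lambda>y. uxxt y t) x"

context
  fixes t :: real
  assumes t: "t \<ge> t0"
begin

lemma ut_deriv_x: "\<forall>x\<in>{0..1}. ((\<lambda>y. ut y t) has_real_derivative utx x t) (at x within {0..1})"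
  using has_real_derivative_dirichlet_green[OF slice_cont_uxxt[OF t]] ut_eq_green[OF t] unfolding utx_def
  by (auto intro: has_real_derivative_transform_on[where f="dirichlet_green (\<lambda>y. uxxt y t)"])

lemma utx_deriv_x: "\<forall>x\<in>{0..1}. ((\<lambda>y. utx y t) has_real_derivative uxxt x t) (at x within {0..1})"
  using has_real_derivative_dirichlet_green_deriv[OF slice_cont_uxxt[OF t]] unfolding utx_def by auto

lemma slice_cont_utx: "continuous_on {0..1} (\<lambda>x. utx x t)"
  using continuous_on_dirichlet_green_deriv[OF slice_cont_uxxt[OF t]] unfolding utx_def by auto

lemma ut_boundary: "ut 0 t = 0" "ut 1 t = 0"
  using dirichlet_green_boundary[OF slice_cont_uxxt[OF t]] ut_eq_green[OF t] by auto

lemma u_boundary: "u 0 t = 0" "u 1 t = 0" using bc t by auto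

lemma u_deriv_x: "\<forall>x\<in>{0..1}. ((\<lambda>y. u y t) has_real_derivative ux x t) (at x within {0..1})"
  using derivs t by auto

lemma ux_deriv_x: "\<forall>x\<in>{0..1}. ((\<lambda>y. ux y t) has_real_derivative uxx x t) (at x within {0..1})"
  using derivs t by auto

end

definition "u2 t = integral {0..1} (\<lambda>x. (u x t)\<^sup>2)"
definition "ux2 t = integral {0..1} (\<lambda>x. (ux x t)\<^sup>2)"
definition "uxx2 t = integral {0..1} (\<lambda>x. (uxx x t)\<^sup>2)"
definition "ut2 t = integral {0..1} (\<lambda>x. (ut x t)\<^sup>2)"
definition "utx2 t = integral {0..1} (\<lambda>x. (utx x t)\<^sup>2)"
definition "minus_u_uxx t = - integral {0..1} (\<lambda>x. u x t * uxx x t)"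
definition "G_u t = integral {0..1} (\<lambda>x. G (u x t))"
definition "u_ut t = integral {0..1} (\<lambda>x. u x t * ut x t)"
definition "Y t = integral {0..1} (\<lambda>x. (eps * uxx x t - ut x t)\<^sup>2)"
definition "dsol t = dG (\<lambda>x. u x t) (\<lambda>x. ux x t) (\<lambda>x. uxx x t) (\<lambda>x. ut x t)"

text \<open>By the equation, \<open>damping x t = a x t (u x t) \<dots> * ut x t\<close> for \<open>0 < x < 1\<close> (\<open>damping_eq\<close>);
  unlike that product, this expression is continuous up to the boundary.\<close>

definition "damping x t = F (u x t) + eps * uxxt x t + uxx x t - utt x t"
definition "damping2 t = integral {0..1} (\<lambda>x. (damping x t)\<^sup>2)"
definition "excess_dissipation t = integral {0..1} (\<lambda>x. damping x t * ut x t) - a_inf * ut2 t"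
definition "a_bound_at t = A * rpow (dsol t) tau + A'"

text \<open>\<open>minus_u_uxx\<close> equals \<open>ux2\<close> (\<open>minus_u_uxx_eq\<close>), but only the former can be differentiated in
  time: the notion of solution provides no time derivative of \<open>ux\<close>.\<close>

definition "energy t = ut2 t / 2 + minus_u_uxx t / 2 - G_u t"
definition "J t = u_ut t + eps / 2 * minus_u_uxx t"

lemma slice_cont_damping: "t \<ge> t0 \<Longrightarrow> continuous_on {0..1} (\<lambda>x. damping x t)"
  unfolding damping_def by (intro continuous_intros slice_cont) auto

context
  fixes t :: real
  assumes t: "t \<ge> t0"
begin

lemma minus_u_uxx_eq: "minus_u_uxx t = ux2 t"
  using integration_by_parts_within[OF zero_le_one u_deriv_x[OF t] ux_deriv_x[OF t] slice_cont_ux[OF t]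
      slice_cont_uxx[OF t]] u_boundary[OF t]
  unfolding minus_u_uxx_def ux2_def by (simp add: power2_eq_square)

lemma integral_ut_uxxt: "integral {0..1} (\<lambda>x. ut x t * uxxt x t) = - utx2 t"
  using integration_by_parts_within[OF zero_le_one ut_deriv_x[OF t] utx_deriv_x[OF t] slice_cont_utx[OF t]
      slice_cont_uxxt[OF t]] ut_boundary[OF t]
  unfolding utx2_def by (simp add: power2_eq_square)

lemma integral_u_uxxt: "integral {0..1} (\<lambda>x. u x t * uxxt x t) = integral {0..1} (\<lambda>x. ut x t * uxx x t)"
proof -
  have "integral {0..1} (\<lambda>x. u x t * uxxt x t) = - integral {0..1} (\<lambda>x. ux x t * utx x t)"
    using integration_by_parts_within[OF zero_le_one u_deriv_x[OF t] utx_deriv_x[OF t] slice_cont_ux[OF t]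
        slice_cont_uxxt[OF t]] u_boundary[OF t]
    by simp
  moreover have "integral {0..1} (\<lambda>x. ut x t * uxx x t) = - integral {0..1} (\<lambda>x. utx x t * ux x t)"
    using integration_by_parts_within[OF zero_le_one ut_deriv_x[OF t] ux_deriv_x[OF t] slice_cont_utx[OF t]
        slice_cont_uxx[OF t]] ut_boundary[OF t]
    by simp
  ultimately show ?thesis by (simp add: mult.commute)
qed

lemma wirtinger_ut: "pi\<^sup>2 * ut2 t \<le> utx2 t"
  unfolding ut2_def utx2_def
  by (rule wirtinger_inequality[OF ut_deriv_x[OF t] slice_cont_utx[OF t] ut_boundary[OF t]])

lemma wirtinger_u: "pi\<^sup>2 * u2 t \<le> ux2 t"
  unfolding u2_def ux2_def
  by (rule wirtinger_inequality[OF u_deriv_x[OF t] slice_cont_ux[OF t] u_boundary[OF t]])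

lemma u_square_le: "x \<in> {0..1} \<Longrightarrow> (u x t)\<^sup>2 \<le> ux2 t"
  using square_le_integral_deriv_square[OF u_deriv_x[OF t] slice_cont_ux[OF t] u_boundary(1)[OF t]]
  unfolding ux2_def by simp

lemma norms_nonneg:
  "u2 t \<ge> 0" "ux2 t \<ge> 0" "uxx2 t \<ge> 0" "ut2 t \<ge> 0" "utx2 t \<ge> 0" "Y t \<ge> 0" "damping2 t \<ge> 0"
  unfolding u2_def ux2_def uxx2_def ut2_def utx2_def Y_def damping2_def
  by (auto intro!: integral_nonneg integrable_continuous_interval continuous_intros
      slice_cont slice_cont_utx slice_cont_damping t)

lemma dsol_square: "(dsol t)\<^sup>2 = u2 t + ux2 t + uxx2 t + ut2 t"
  and dsol_nonneg: "dsol t \<ge> 0"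
proof -
  have "integral {0..1} (\<lambda>x. (u x t)\<^sup>2 + (ux x t)\<^sup>2 + (uxx x t)\<^sup>2 + (ut x t)\<^sup>2)
          = u2 t + ux2 t + uxx2 t + ut2 t"
    unfolding u2_def ux2_def uxx2_def ut2_def
    by (subst integral_add, auto intro!: integrable_continuous_interval continuous_intros slice_cont t)+
  moreover have "u2 t + ux2 t + uxx2 t + ut2 t \<ge> 0" using norms_nonneg by simp
  ultimately show "(dsol t)\<^sup>2 = u2 t + ux2 t + uxx2 t + ut2 t" "dsol t \<ge> 0"
    unfolding dsol_def dG_def by simp_all
qed

end

definition "energy' t = integral {0..1} (\<lambda>x. 2 * ut x t * utt x t) / 2
   - integral {0..1} (\<lambda>x. ut x t * uxx x t + u x t * uxxt x t) / 2
   - integral {0..1} (\<lambda>x. F (u x t) * ut x t)"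
definition "J' t = integral {0..1} (\<lambda>x. ut x t * ut x t + u x t * utt x t)
   - eps / 2 * integral {0..1} (\<lambda>x. ut x t * uxx x t + u x t * uxxt x t)"
definition "Y' t = integral {0..1} (\<lambda>x. 2 * (eps * uxx x t - ut x t) * (eps * uxxt x t - utt x t))"

context
  fixes t :: real
  assumes t: "t \<ge> t0"
begin

lemma ut2_deriv:
  "(ut2 has_real_derivative integral {0..1} (\<lambda>x. 2 * ut x t * utt x t)) (at t within {t0..})"
  unfolding ut2_def[abs_def] using t
  by (intro leibniz_rule_atLeast)
    (use derivs in \<open>auto intro!: derivative_eq_intros continuous_intros joint_cont slice_cont\<close>)

lemma minus_u_uxx_deriv:
  "(minus_u_uxx has_real_derivative - integral {0..1} (\<lambda>x. ut x t * uxx x t + u x t * uxxt x t))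
     (at t within {t0..})"
  unfolding minus_u_uxx_def[abs_def] using t
  by (intro derivative_intros leibniz_rule_atLeast)
    (use derivs in \<open>auto intro!: derivative_eq_intros continuous_intros joint_cont slice_cont\<close>)

lemma G_u_deriv: "(G_u has_real_derivative integral {0..1} (\<lambda>x. F (u x t) * ut x t)) (at t within {t0..})"
  unfolding G_u_def[abs_def] using t
  by (intro leibniz_rule_atLeast)
    (use derivs G_deriv in \<open>auto intro!: DERIV_chain2[where f=G] continuous_intros joint_cont slice_cont\<close>)

lemma u_ut_deriv:
  "(u_ut has_real_derivative integral {0..1} (\<lambda>x. ut x t * ut x t + u x t * utt x t)) (at t within {t0..})"
  unfolding u_ut_def[abs_def] using t
  by (intro leibniz_rule_atLeast)
    (use derivs in \<open>auto intro!: derivative_eq_intros continuous_intros joint_cont slice_cont\<close>)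

lemma Y_deriv: "(Y has_real_derivative Y' t) (at t within {t0..})"
  unfolding Y_def[abs_def] Y'_def using t
  by (intro leibniz_rule_atLeast)
    (use derivs in \<open>auto intro!: derivative_eq_intros continuous_intros joint_cont slice_cont
                    simp: algebra_simps\<close>)

lemma energy_deriv: "(energy has_real_derivative energy' t) (at t within {t0..})"
  unfolding energy_def[abs_def] energy'_def
  using ut2_deriv minus_u_uxx_deriv G_u_deriv by (auto intro!: derivative_eq_intros)

lemma J_deriv: "(J has_real_derivative J' t) (at t within {t0..})"
  unfolding J_def[abs_def] J'_def
  using u_ut_deriv minus_u_uxx_deriv by (auto intro!: derivative_eq_intros)

lemma energy'_eq: "energy' t = - eps * utx2 t - integral {0..1} (\<lambda>x. damping x t * ut x t)"
proof -
  have c: "continuous_on {0..1} (\<lambda>x. ut x t * F (u x t))" "continuous_on {0..1} (\<lambda>x. ut x t * uxxt x t)"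
    "continuous_on {0..1} (\<lambda>x. ut x t * uxx x t)" "continuous_on {0..1} (\<lambda>x. damping x t * ut x t)"
    "continuous_on {0..1} (\<lambda>x. u x t * uxxt x t)"
    by (auto intro!: continuous_intros slice_cont slice_cont_damping t)
  have "integral {0..1} (\<lambda>x. 2 * ut x t * utt x t)
      = integral {0..1} (\<lambda>x. 2 * (ut x t * F (u x t)) + (2 * eps) * (ut x t * uxxt x t)
                              + 2 * (ut x t * uxx x t) + (-2) * (damping x t * ut x t))"
    by (rule integral_cong) (simp add: damping_def algebra_simps)
  also have "\<dots> = 2 * integral {0..1} (\<lambda>x. ut x t * F (u x t))
      + (2 * eps) * integral {0..1} (\<lambda>x. ut x t * uxxt x t)
      + 2 * integral {0..1} (\<lambda>x. ut x t * uxx x t) + (-2) * integral {0..1} (\<lambda>x. damping x t * ut x t)"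
    by (rule integral_lincomb4[OF c(1-4)])
  finally have e1: "integral {0..1} (\<lambda>x. 2 * ut x t * utt x t) = \<dots>" .
  have "integral {0..1} (\<lambda>x. ut x t * uxx x t + u x t * uxxt x t)
      = 1 * integral {0..1} (\<lambda>x. ut x t * uxx x t) + 1 * integral {0..1} (\<lambda>x. u x t * uxxt x t)"
    using integral_lincomb2[OF c(3) c(5), of 1 1] by simp
  then have e2: "integral {0..1} (\<lambda>x. ut x t * uxx x t + u x t * uxxt x t)
      = 2 * integral {0..1} (\<lambda>x. ut x t * uxx x t)"
    using integral_u_uxxt[OF t] by simp
  have e3: "integral {0..1} (\<lambda>x. F (u x t) * ut x t) = integral {0..1} (\<lambda>x. ut x t * F (u x t))"
    by (simp add: mult.commute)
  show ?thesis unfolding energy'_def e1 e2 e3 integral_ut_uxxt[OF t] by (simp add: field_simps)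
qed

lemma J'_eq: "J' t = ut2 t + integral {0..1} (\<lambda>x. u x t * F (u x t)) - minus_u_uxx t
                     - integral {0..1} (\<lambda>x. u x t * damping x t)"
proof -
  have c: "continuous_on {0..1} (\<lambda>x. u x t * F (u x t))" "continuous_on {0..1} (\<lambda>x. u x t * uxxt x t)"
    "continuous_on {0..1} (\<lambda>x. u x t * uxx x t)" "continuous_on {0..1} (\<lambda>x. u x t * damping x t)"
    "continuous_on {0..1} (\<lambda>x. ut x t * uxx x t)" "continuous_on {0..1} (\<lambda>x. ut x t * ut x t)"
    "continuous_on {0..1} (\<lambda>x. u x t * utt x t)"
    by (auto intro!: continuous_intros slice_cont slice_cont_damping t)
  have "integral {0..1} (\<lambda>x. u x t * utt x t)
      = integral {0..1} (\<lambda>x. 1 * (u x t * F (u x t)) + eps * (u x t * uxxt x t)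
                              + 1 * (u x t * uxx x t) + (-1) * (u x t * damping x t))"
    by (rule integral_cong) (simp add: damping_def algebra_simps)
  also have "\<dots> = integral {0..1} (\<lambda>x. u x t * F (u x t)) + eps * integral {0..1} (\<lambda>x. u x t * uxxt x t)
      + integral {0..1} (\<lambda>x. u x t * uxx x t) - integral {0..1} (\<lambda>x. u x t * damping x t)"
    using integral_lincomb4[OF c(1-4), of 1 eps 1 "-1"] by simp
  finally have e1: "integral {0..1} (\<lambda>x. u x t * utt x t) = \<dots>" .
  have "integral {0..1} (\<lambda>x. ut x t * uxx x t + u x t * uxxt x t)
      = 1 * integral {0..1} (\<lambda>x. ut x t * uxx x t) + 1 * integral {0..1} (\<lambda>x. u x t * uxxt x t)"
    using integral_lincomb2[OF c(5) c(2), of 1 1] by simp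
  then have e2: "integral {0..1} (\<lambda>x. ut x t * uxx x t + u x t * uxxt x t)
      = 2 * integral {0..1} (\<lambda>x. u x t * uxxt x t)"
    using integral_u_uxxt[OF t] by simp
  have "integral {0..1} (\<lambda>x. ut x t * ut x t + u x t * utt x t)
      = 1 * integral {0..1} (\<lambda>x. ut x t * ut x t) + 1 * integral {0..1} (\<lambda>x. u x t * utt x t)"
    using integral_lincomb2[OF c(6) c(7), of 1 1] by simp
  then have e3: "integral {0..1} (\<lambda>x. ut x t * ut x t + u x t * utt x t)
      = ut2 t + integral {0..1} (\<lambda>x. u x t * utt x t)"
    unfolding ut2_def by (simp add: power2_eq_square)
  show ?thesis unfolding J'_def e2 e3 e1 minus_u_uxx_def by (simp add: algebra_simps)
qed

lemma Y'_eq: "Y' t = 2 * integral {0..1} (\<lambda>x. (eps * uxx x t - ut x t) * damping x t)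
   - 2 * integral {0..1} (\<lambda>x. (eps * uxx x t - ut x t) * F (u x t))
   - 2 / eps * Y t - 2 / eps * integral {0..1} (\<lambda>x. (eps * uxx x t - ut x t) * ut x t)"
proof -
  have c: "continuous_on {0..1} (\<lambda>x. (eps * uxx x t - ut x t) * damping x t)"
    "continuous_on {0..1} (\<lambda>x. (eps * uxx x t - ut x t) * F (u x t))"
    "continuous_on {0..1} (\<lambda>x. (eps * uxx x t - ut x t)\<^sup>2)"
    "continuous_on {0..1} (\<lambda>x. (eps * uxx x t - ut x t) * ut x t)"
    by (auto intro!: continuous_intros slice_cont slice_cont_damping t)
  have "Y' t = integral {0..1} (\<lambda>x. 2 * ((eps * uxx x t - ut x t) * damping x t)
                + (-2) * ((eps * uxx x t - ut x t) * F (u x t))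
                + (- 2 / eps) * (eps * uxx x t - ut x t)\<^sup>2 + (- 2 / eps) * ((eps * uxx x t - ut x t) * ut x t))"
    unfolding Y'_def using eps_pos
    by (intro integral_cong) (simp add: damping_def field_simps power2_eq_square)
  also have "\<dots> = 2 * integral {0..1} (\<lambda>x. (eps * uxx x t - ut x t) * damping x t)
      + (-2) * integral {0..1} (\<lambda>x. (eps * uxx x t - ut x t) * F (u x t))
      + (- 2 / eps) * Y t + (- 2 / eps) * integral {0..1} (\<lambda>x. (eps * uxx x t - ut x t) * ut x t)"
    unfolding Y_def by (rule integral_lincomb4[OF c])
  finally show ?thesis by simp
qed

end

section \<open>Energy estimates\<close>

lemma a_bound_at_nonneg: "a_bound_at t \<ge> 0"
  unfolding a_bound_at_def rpow_def using A_pos A'_nonneg by simp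

lemma a_sol_bounds:
  assumes x: "x \<in> {0<..<1}" and t: "t \<ge> t0"
  shows "a_inf \<le> a x t (u x t) (ux x t) (uxx x t) (ut x t)"
    and "a x t (u x t) (ux x t) (uxx x t) (ut x t) \<le> a_bound_at t"
proof -
  show "a_inf \<le> a x t (u x t) (ux x t) (uxx x t) (ut x t)" using a_inf_le x t t0_nonneg by simp
  have "in_Gamma (\<lambda>x. u x t) (\<lambda>x. ux x t) (\<lambda>x. uxx x t) (\<lambda>x. ut x t)"
    unfolding in_Gamma_def using u_deriv_x[OF t] ux_deriv_x[OF t] slice_cont_uxx[OF t] slice_cont_ut[OF t]
      u_boundary[OF t] ut_boundary[OF t] by auto
  moreover have "0 \<le> t" using t t0_nonneg by simp
  ultimately show "a x t (u x t) (ux x t) (uxx x t) (ut x t) \<le> a_bound_at t"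
    using a_growth[rule_format, OF _ x] unfolding a_bound_at_def dsol_def by blast
qed

lemma damping_eq:
  "x \<in> {0<..<1} \<Longrightarrow> t > t0 \<Longrightarrow> damping x t = a x t (u x t) (ux x t) (uxx x t) (ut x t) * ut x t"
  using pde unfolding damping_def by (auto simp: algebra_simps)

context
  fixes t :: real
  assumes t: "t > t0"
begin

lemma a_inf_ut_square_le: "x \<in> {0..1} \<Longrightarrow> a_inf * (ut x t)\<^sup>2 \<le> damping x t * ut x t"
proof (rule continuous_le_on_closed_interval[where f="\<lambda>x. a_inf * (ut x t)\<^sup>2" and g="\<lambda>x. damping x t * ut x t"])
  show "continuous_on {0..1} (\<lambda>x. a_inf * (ut x t)\<^sup>2)" "continuous_on {0..1} (\<lambda>x. damping x t * ut x t)"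
    using t by (auto intro!: continuous_intros slice_cont slice_cont_damping)
  show "\<forall>x\<in>{0<..<1}. a_inf * (ut x t)\<^sup>2 \<le> damping x t * ut x t"
  proof
    fix x :: real assume x: "x \<in> {0<..<1}"
    have "a_inf * (ut x t)\<^sup>2 \<le> a x t (u x t) (ux x t) (uxx x t) (ut x t) * (ut x t)\<^sup>2"
      using a_sol_bounds(1)[OF x] t by (intro mult_right_mono) auto
    then show "a_inf * (ut x t)\<^sup>2 \<le> damping x t * ut x t"
      using damping_eq[OF x t] by (simp add: power2_eq_square mult.assoc)
  qed
qed simp

lemma damping_square_le:
  "x \<in> {0..1} \<Longrightarrow>
     (damping x t)\<^sup>2
       \<le> (a_bound_at t + \<bar>a_inf\<bar>) * (damping x t * ut x t - a_inf * (ut x t)\<^sup>2 + \<bar>a_inf\<bar> * (ut x t)\<^sup>2)"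
proof (rule continuous_le_on_closed_interval[where f="\<lambda>x. (damping x t)\<^sup>2"])
  show "continuous_on {0..1} (\<lambda>x. (damping x t)\<^sup>2)"
    "continuous_on {0..1} (\<lambda>x. (a_bound_at t + \<bar>a_inf\<bar>)
                                 * (damping x t * ut x t - a_inf * (ut x t)\<^sup>2 + \<bar>a_inf\<bar> * (ut x t)\<^sup>2))"
    using t by (auto intro!: continuous_intros slice_cont slice_cont_damping)
  show "\<forall>x\<in>{0<..<1}. (damping x t)\<^sup>2
          \<le> (a_bound_at t + \<bar>a_inf\<bar>) * (damping x t * ut x t - a_inf * (ut x t)\<^sup>2 + \<bar>a_inf\<bar> * (ut x t)\<^sup>2)"
    using a_sol_bounds damping_eq t square_le_bound_mult_excess[OF _ _ a_bound_at_nonneg] by simp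
qed simp

lemma excess_dissipation_nonneg: "excess_dissipation t \<ge> 0"
proof -
  have "0 \<le> integral {0..1} (\<lambda>x. damping x t * ut x t - a_inf * (ut x t)\<^sup>2)"
    using a_inf_ut_square_le t
    by (intro integral_nonneg)
      (auto intro!: integrable_continuous_interval continuous_intros slice_cont slice_cont_damping)
  also have "\<dots> = integral {0..1} (\<lambda>x. 1 * (damping x t * ut x t) + (- a_inf) * (ut x t)\<^sup>2)" by simp
  also have "\<dots> = excess_dissipation t" unfolding excess_dissipation_def ut2_def
    by (subst integral_lincomb2) (use t in \<open>auto intro!: continuous_intros slice_cont slice_cont_damping\<close>)
  finally show ?thesis .
qed

lemma damping2_le: "damping2 t \<le> (a_bound_at t + \<bar>a_inf\<bar>) * (excess_dissipation t + \<bar>a_inf\<bar> * ut2 t)"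
proof -
  let ?M = "a_bound_at t + \<bar>a_inf\<bar>"
  have "damping2 t \<le> integral {0..1} (\<lambda>x. ?M * (damping x t * ut x t - a_inf * (ut x t)\<^sup>2 + \<bar>a_inf\<bar> * (ut x t)\<^sup>2))"
    unfolding damping2_def using damping_square_le t
    by (intro integral_le)
      (auto intro!: integrable_continuous_interval continuous_intros slice_cont slice_cont_damping)
  also have "\<dots> = integral {0..1} (\<lambda>x. ?M * (damping x t * ut x t) + (?M * (\<bar>a_inf\<bar> - a_inf)) * (ut x t)\<^sup>2)"
    by (rule integral_cong) algebra
  also have "\<dots> = ?M * integral {0..1} (\<lambda>x. damping x t * ut x t) + (?M * (\<bar>a_inf\<bar> - a_inf)) * ut2 t"
    unfolding ut2_def
    by (subst integral_lincomb2) (use t in \<open>auto intro!: continuous_intros slice_cont slice_cont_damping\<close>)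
  also have "\<dots> = ?M * (excess_dissipation t + \<bar>a_inf\<bar> * ut2 t)"
    unfolding excess_dissipation_def by (simp add: algebra_simps)
  finally show ?thesis .
qed

lemma energy'_le: "energy' t \<le> - kappa * utx2 t - excess_dissipation t"
proof -
  have tt: "t \<ge> t0" using t by simp
  have D0: "utx2 t \<ge> 0" "ut2 t \<ge> 0" using norms_nonneg[OF tt] by auto
  have "- eps * utx2 t - a_inf * ut2 t \<le> - kappa * utx2 t"
  proof (cases "a_inf \<ge> 0")
    case True
    have "kappa \<le> eps" unfolding kappa_def by simp
    then have "kappa * utx2 t \<le> eps * utx2 t" by (rule mult_right_mono[OF _ D0(1)])
    moreover have "a_inf * ut2 t \<ge> 0" using True D0 by simp
    ultimately show ?thesis by simp
  next
    case False
    have "(- a_inf) * (pi\<^sup>2 * ut2 t) \<le> (- a_inf) * utx2 t"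
      using False wirtinger_ut[OF tt] by (intro mult_left_mono) auto
    then have "- a_inf * ut2 t \<le> (- a_inf / pi\<^sup>2) * utx2 t" by (simp add: field_simps)
    moreover have "kappa \<le> nu / pi\<^sup>2" unfolding kappa_def by simp
    then have "kappa * utx2 t \<le> nu / pi\<^sup>2 * utx2 t" by (rule mult_right_mono[OF _ D0(1)])
    moreover have "nu / pi\<^sup>2 * utx2 t = eps * utx2 t + a_inf / pi\<^sup>2 * utx2 t"
      unfolding nu_def by (simp add: field_simps)
    ultimately show ?thesis by simp
  qed
  then show ?thesis using energy'_eq[OF tt] unfolding excess_dissipation_def by simp
qed

end

context
  fixes t :: real
  assumes t: "t \<ge> t0"
begin

lemma integral_u_F_le: "integral {0..1} (\<lambda>x. u x t * F (u x t)) \<le> K * u2 t"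
proof -
  have "integral {0..1} (\<lambda>x. u x t * F (u x t)) \<le> integral {0..1} (\<lambda>x. K * (u x t)\<^sup>2)"
    using mult_le_square_if_deriv_le[OF F_deriv F'_le F0] t
    by (intro integral_le) (auto intro!: integrable_continuous_interval continuous_intros slice_cont)
  then show ?thesis unfolding u2_def by simp
qed

lemma K_u2_le: "K * u2 t \<le> (1 - k_F) * ux2 t"
proof -
  have "pi\<^sup>2 * u2 t \<le> ux2 t" by (rule wirtinger_u[OF t])
  then have "K * (pi\<^sup>2 * u2 t) \<le> K * ux2 t" using K_pos by (intro mult_left_mono) auto
  then show ?thesis unfolding k_F_def by (simp add: field_simps)
qed

lemma J'_le: "J' t \<le> ut2 t - k_F * ux2 t + sqrt (u2 t) * sqrt (damping2 t)"
proof -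
  have "- integral {0..1} (\<lambda>x. u x t * damping x t) \<le> sqrt (u2 t) * sqrt (damping2 t)"
    using abs_integral_mult_le_sqrt[OF slice_cont_u[OF t] slice_cont_damping[OF t]]
    unfolding u2_def damping2_def by (simp add: abs_le_iff)
  then show ?thesis
    using J'_eq[OF t] integral_u_F_le K_u2_le minus_u_uxx_eq[OF t] by (simp add: algebra_simps)
qed

lemma energy_ge: "energy t \<ge> ut2 t / 2 + k_F / 2 * ux2 t"
proof -
  have "G_u t \<le> integral {0..1} (\<lambda>x. K / 2 * (u x t)\<^sup>2)"
    unfolding G_u_def using primitive_le_if_deriv_le[OF F_deriv F'_le F0 G_deriv G0] t
    by (intro integral_le) (auto intro!: integrable_continuous_interval continuous_intros slice_cont)
  then have "G_u t \<le> K / 2 * u2 t" unfolding u2_def by simp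
  then show ?thesis unfolding energy_def using K_u2_le minus_u_uxx_eq[OF t] by (simp add: field_simps)
qed

lemma energy_le_if_G_ge:
  assumes L: "\<forall>x\<in>{0..1}. G (u x t) \<ge> - L * (u x t)\<^sup>2 / 2"
  shows "energy t \<le> ut2 t / 2 + ux2 t / 2 + L / 2 * u2 t"
proof -
  have "integral {0..1} (\<lambda>x. - L / 2 * (u x t)\<^sup>2) \<le> G_u t"
    unfolding G_u_def using L t
    by (intro integral_le) (auto intro!: integrable_continuous_interval continuous_intros slice_cont)
  then have "- L / 2 * u2 t \<le> G_u t" unfolding u2_def by simp
  then show ?thesis unfolding energy_def using minus_u_uxx_eq[OF t] by simp
qed

lemma Y_le: "Y t \<le> 2 * eps\<^sup>2 * uxx2 t + 2 * ut2 t"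
proof -
  have "Y t \<le> integral {0..1} (\<lambda>x. (2 * eps\<^sup>2) * (uxx x t)\<^sup>2 + 2 * (ut x t)\<^sup>2)"
    unfolding Y_def
  proof (intro integral_le)
    show "(eps * uxx x t - ut x t)\<^sup>2 \<le> (2 * eps\<^sup>2) * (uxx x t)\<^sup>2 + 2 * (ut x t)\<^sup>2" for x
    proof -
      have "0 \<le> (eps * uxx x t + ut x t)\<^sup>2" by simp
      then show "(eps * uxx x t - ut x t)\<^sup>2 \<le> (2 * eps\<^sup>2) * (uxx x t)\<^sup>2 + 2 * (ut x t)\<^sup>2"
        by (simp add: power2_eq_square algebra_simps)
    qed
  qed (use t in \<open>auto intro!: integrable_continuous_interval continuous_intros slice_cont\<close>)
  also have "\<dots> = (2 * eps\<^sup>2) * uxx2 t + 2 * ut2 t" unfolding uxx2_def ut2_def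
    by (subst integral_lincomb2) (use t in \<open>auto intro!: continuous_intros slice_cont\<close>)
  finally show ?thesis by simp
qed

lemma uxx2_le: "uxx2 t \<le> 2 * (Y t + ut2 t) / eps\<^sup>2"
proof -
  have "eps\<^sup>2 * uxx2 t = integral {0..1} (\<lambda>x. (eps * uxx x t - ut x t + ut x t)\<^sup>2)"
    unfolding uxx2_def by (simp add: power_mult_distrib)
  also have "\<dots> \<le> integral {0..1} (\<lambda>x. 2 * (eps * uxx x t - ut x t)\<^sup>2 + 2 * (ut x t)\<^sup>2)"
  proof (intro integral_le)
    show "(eps * uxx x t - ut x t + ut x t)\<^sup>2 \<le> 2 * (eps * uxx x t - ut x t)\<^sup>2 + 2 * (ut x t)\<^sup>2" for x
    proof -
      have "0 \<le> (eps * uxx x t - ut x t - ut x t)\<^sup>2" by simp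
      then show "(eps * uxx x t - ut x t + ut x t)\<^sup>2 \<le> 2 * (eps * uxx x t - ut x t)\<^sup>2 + 2 * (ut x t)\<^sup>2"
        by (simp add: power2_eq_square algebra_simps)
    qed
  qed (use t in \<open>auto intro!: integrable_continuous_interval continuous_intros slice_cont\<close>)
  also have "\<dots> = 2 * Y t + 2 * ut2 t" unfolding Y_def ut2_def
    by (subst integral_lincomb2) (use t in \<open>auto intro!: continuous_intros slice_cont\<close>)
  finally have "eps\<^sup>2 * uxx2 t \<le> 2 * (Y t + ut2 t)" by simp
  then show ?thesis using eps_pos by (simp add: field_simps)
qed

lemma integral_F_u_square_le:
  assumes L: "\<forall>x\<in>{0..1}. \<bar>F (u x t)\<bar> \<le> L * \<bar>u x t\<bar>"
  shows "integral {0..1} (\<lambda>x. (F (u x t))\<^sup>2) \<le> L\<^sup>2 * u2 t"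
proof -
  have "(F (u x t))\<^sup>2 \<le> L\<^sup>2 * (u x t)\<^sup>2" if "x \<in> {0..1}" for x
  proof -
    have "\<bar>F (u x t)\<bar>\<^sup>2 \<le> (L * \<bar>u x t\<bar>)\<^sup>2" using L that by (intro power_mono) auto
    then show ?thesis by (simp add: power_mult_distrib)
  qed
  then have "integral {0..1} (\<lambda>x. (F (u x t))\<^sup>2) \<le> integral {0..1} (\<lambda>x. L\<^sup>2 * (u x t)\<^sup>2)"
    using t by (intro integral_le) (auto intro!: integrable_continuous_interval continuous_intros slice_cont)
  then show ?thesis unfolding u2_def by simp
qed

lemma Y'_le:
  assumes L: "\<forall>x\<in>{0..1}. \<bar>F (u x t)\<bar> \<le> L * \<bar>u x t\<bar>" and L0: "L \<ge> 0"
  shows "Y' t \<le> - 2 / eps * Y t + 2 * sqrt (Y t) * (sqrt (damping2 t) + L * sqrt (u2 t) + sqrt (ut2 t) / eps)"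
proof -
  have cm: "continuous_on {0..1} (\<lambda>x. eps * uxx x t - ut x t)"
    using t by (auto intro!: continuous_intros slice_cont)
  have i1: "integral {0..1} (\<lambda>x. (eps * uxx x t - ut x t) * damping x t) \<le> sqrt (Y t) * sqrt (damping2 t)"
    using abs_integral_mult_le_sqrt[OF cm slice_cont_damping[OF t]] unfolding Y_def damping2_def
    by (simp add: abs_le_iff)
  have "- integral {0..1} (\<lambda>x. (eps * uxx x t - ut x t) * F (u x t))
          \<le> sqrt (Y t) * sqrt (integral {0..1} (\<lambda>x. (F (u x t))\<^sup>2))"
    using abs_integral_mult_le_sqrt[OF cm slice_cont_Fu[OF t]] unfolding Y_def by (simp add: abs_le_iff)
  also have "\<dots> \<le> sqrt (Y t) * (L * sqrt (u2 t))"
  proof (rule mult_left_mono)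
    have "sqrt (integral {0..1} (\<lambda>x. (F (u x t))\<^sup>2)) \<le> sqrt (L\<^sup>2 * u2 t)"
      using integral_F_u_square_le[OF L] by simp
    also have "\<dots> = L * sqrt (u2 t)" using L0 by (simp add: real_sqrt_mult)
    finally show "sqrt (integral {0..1} (\<lambda>x. (F (u x t))\<^sup>2)) \<le> L * sqrt (u2 t)" .
  qed (use norms_nonneg[OF t] in simp)
  finally have i2:
    "- integral {0..1} (\<lambda>x. (eps * uxx x t - ut x t) * F (u x t)) \<le> sqrt (Y t) * (L * sqrt (u2 t))" .
  have i3: "- integral {0..1} (\<lambda>x. (eps * uxx x t - ut x t) * ut x t) \<le> sqrt (Y t) * sqrt (ut2 t)"
    using abs_integral_mult_le_sqrt[OF cm slice_cont_ut[OF t]] unfolding Y_def ut2_def by (simp add: abs_le_iff)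
  have "Y' t = 2 * integral {0..1} (\<lambda>x. (eps * uxx x t - ut x t) * damping x t)
      + 2 * (- integral {0..1} (\<lambda>x. (eps * uxx x t - ut x t) * F (u x t)))
      - 2 / eps * Y t + 2 / eps * (- integral {0..1} (\<lambda>x. (eps * uxx x t - ut x t) * ut x t))"
    using Y'_eq[OF t] by simp
  also have "\<dots> \<le> 2 * (sqrt (Y t) * sqrt (damping2 t)) + 2 * (sqrt (Y t) * (L * sqrt (u2 t))) - 2 / eps * Y t
      + 2 / eps * (sqrt (Y t) * sqrt (ut2 t))"
    using i1 i2 i3 eps_pos by (intro add_mono diff_mono mult_left_mono) auto
  also have "\<dots> = - 2 / eps * Y t + 2 * sqrt (Y t) * (sqrt (damping2 t) + L * sqrt (u2 t) + sqrt (ut2 t) / eps)"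
    by (simp add: algebra_simps)
  finally show ?thesis .
qed

end

lemma energy_antimono: "t \<ge> t0 \<Longrightarrow> energy t \<le> energy t0"
proof -
  assume t: "t \<ge> t0"
  have "energy' s \<le> - 0 * energy s" if "s > t0" for s
  proof -
    have "0 \<le> kappa * utx2 s" using kappa_pos norms_nonneg(5)[of s] that by simp
    then show ?thesis using energy'_le[OF that] excess_dissipation_nonneg[OF that] by simp
  qed
  then have "energy t \<le> exp (- 0 * (t - t0)) * energy t0"
    using energy_deriv t by (intro exp_decay_if_deriv_le[where g' = energy']) auto
  then show ?thesis by simp
qed

lemma energy_nonneg: "t \<ge> t0 \<Longrightarrow> energy t \<ge> 0"
proof -
  assume t: "t \<ge> t0"
  have "k_F / 2 * ux2 t \<ge> 0" using k_F_pos norms_nonneg[OF t] by (intro mult_nonneg_nonneg) auto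
  then show ?thesis using energy_ge[OF t] norms_nonneg[OF t] by linarith
qed

lemma u2_le_ux2: "t \<ge> t0 \<Longrightarrow> u2 t \<le> ux2 t"
proof -
  assume t: "t \<ge> t0"
  have "(1::real) \<le> pi\<^sup>2" using pi_gt3 by (intro one_le_power) simp
  then have "1 * u2 t \<le> pi\<^sup>2 * u2 t" using norms_nonneg[OF t] by (intro mult_right_mono) auto
  then show ?thesis using wirtinger_u[OF t] by simp
qed

lemma abs_u_ut_le_half: "t \<ge> t0 \<Longrightarrow> \<bar>u_ut t\<bar> \<le> (ux2 t + ut2 t) / 2"
proof -
  assume t: "t \<ge> t0"
  have "\<bar>u_ut t\<bar> \<le> sqrt (u2 t) * sqrt (ut2 t)"
    using abs_integral_mult_le_sqrt[OF slice_cont_u[OF t] slice_cont_ut[OF t]] unfolding u_ut_def u2_def ut2_def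
    by simp
  also have "\<dots> \<le> (u2 t + ut2 t) / 2"
    using arith_geo_mean_sqrt[of "u2 t" "ut2 t"] norms_nonneg[OF t] by (simp add: real_sqrt_mult)
  also have "\<dots> \<le> (ux2 t + ut2 t) / 2" using u2_le_ux2[OF t] by simp
  finally show ?thesis .
qed

section \<open>A priori bounds\<close>

definition "Z t = (1 + Y t) powr (1 - beta)"
definition "Z' t = (1 - beta) * (1 + Y t) powr (- beta) * Y' t"

lemma Z_deriv:
  assumes t: "t \<ge> t0"
  shows "(Z has_real_derivative Z' t) (at t within {t0..})"
proof -
  have p: "1 + Y t > 0" using norms_nonneg[OF t] by simp
  have d1: "((\<lambda>z. z powr (1 - beta)) has_real_derivative (1 - beta) * (1 + Y t) powr (1 - beta - 1))
              (at (1 + Y t))"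
    by (rule has_real_derivative_powr[OF p])
  have d2: "((\<lambda>s. 1 + Y s) has_real_derivative 0 + Y' t) (at t within {t0..})"
    by (intro derivative_intros Y_deriv t)
  show ?thesis
    using DERIV_chain2[where g="\<lambda>s. 1 + Y s" and x=t, OF d1 d2] unfolding Z_def[abs_def] Z'_def by simp
qed

context
  fixes \<alpha> :: real
  assumes \<alpha>: "\<alpha> > 0" and d0: "dsol t0 \<le> \<alpha>"
begin

lemma abs_u_t0_le: "x \<in> {0..1} \<Longrightarrow> \<bar>u x t0\<bar> \<le> \<alpha>"
proof -
  assume x: "x \<in> {0..1}"
  have "(u x t0)\<^sup>2 \<le> ux2 t0" by (rule u_square_le[OF order.refl x])
  also have "\<dots> \<le> (dsol t0)\<^sup>2" using dsol_square[OF order.refl] norms_nonneg[OF order.refl] by simp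
  also have "\<dots> \<le> \<alpha>\<^sup>2" using d0 dsol_nonneg[OF order.refl] by (simp add: power_mono)
  finally have "\<bar>u x t0\<bar>\<^sup>2 \<le> \<alpha>\<^sup>2" by simp
  then show ?thesis by (rule power2_le_imp_le) (use \<alpha> in auto)
qed

lemma energy_t0_le: "energy t0 \<le> energy_coeff \<alpha> * \<alpha>\<^sup>2"
proof -
  note nn = norms_nonneg[OF order.refl] and ec = energy_coeff_ge[OF \<alpha>]
  have "energy t0 \<le> ut2 t0 / 2 + ux2 t0 / 2 + abs_bound F' \<alpha> / 2 * u2 t0"
    using primitive_ge_if_deriv_bounded[OF F_deriv F0 abs_bound_F'_alpha(1)[OF \<alpha>] G_deriv G0] abs_u_t0_le
    by (intro energy_le_if_G_ge) auto
  also have "\<dots> \<le> energy_coeff \<alpha> * (u2 t0 + ux2 t0 + uxx2 t0 + ut2 t0)"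
  proof -
    have "ut2 t0 / 2 \<le> energy_coeff \<alpha> * ut2 t0" "ux2 t0 / 2 \<le> energy_coeff \<alpha> * ux2 t0"
      "abs_bound F' \<alpha> / 2 * u2 t0 \<le> energy_coeff \<alpha> * u2 t0" "0 \<le> energy_coeff \<alpha> * uxx2 t0"
      using mult_right_mono[OF ec(1) nn(4)] mult_right_mono[OF ec(1) nn(2)]
        mult_right_mono[OF ec(2) nn(1)] ec nn by simp_all
    then show ?thesis by (simp add: algebra_simps)
  qed
  also have "\<dots> = energy_coeff \<alpha> * (dsol t0)\<^sup>2" using dsol_square[OF order.refl] by simp
  also have "\<dots> \<le> energy_coeff \<alpha> * \<alpha>\<^sup>2"
    using d0 dsol_nonneg[OF order.refl] ec by (intro mult_left_mono power_mono) auto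
  finally show ?thesis .
qed

context
  fixes t :: real
  assumes t: "t \<ge> t0"
begin

lemma energy_le_coeff: "energy t \<le> energy_coeff \<alpha> * \<alpha>\<^sup>2"
  using energy_antimono[OF t] energy_t0_le by simp

lemma ux2_le_energy_bound: "ux2 t \<le> energy_bound \<alpha>"
proof -
  have "k_F / 2 * ux2 t \<le> energy_coeff \<alpha> * \<alpha>\<^sup>2"
    using energy_ge[OF t] energy_le_coeff norms_nonneg[OF t] by simp
  then show ?thesis unfolding energy_bound_def using k_F_pos by (simp add: field_simps)
qed

lemma ut2_le_energy_bound: "ut2 t \<le> energy_bound \<alpha>"
proof -
  have "k_F / 2 * ux2 t \<ge> 0" using k_F_pos norms_nonneg[OF t] by simp
  then have "ut2 t / 2 \<le> energy_coeff \<alpha> * \<alpha>\<^sup>2" using energy_ge[OF t] energy_le_coeff by linarith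
  then show ?thesis using energy_bound_ge[OF \<alpha>] by simp
qed

lemma u2_le_energy_bound: "u2 t \<le> energy_bound \<alpha>"
  using u2_le_ux2[OF t] ux2_le_energy_bound by simp

lemma abs_u_le: "x \<in> {0..1} \<Longrightarrow> \<bar>u x t\<bar> \<le> sqrt (energy_bound \<alpha>)"
proof -
  assume x: "x \<in> {0..1}"
  have "(u x t)\<^sup>2 \<le> energy_bound \<alpha>" using u_square_le[OF t x] ux2_le_energy_bound by simp
  then show ?thesis using real_sqrt_le_mono by fastforce
qed

lemma abs_F_u_le: "\<forall>x\<in>{0..1}. \<bar>F (u x t)\<bar> \<le> lip_F \<alpha> * \<bar>u x t\<bar>"
  using abs_le_if_deriv_bounded[OF F_deriv F0 abs_bound_F'_lip(1)[OF \<alpha>]] abs_u_le by auto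

lemma G_u_ge: "\<forall>x\<in>{0..1}. - lip_F \<alpha> * (u x t)\<^sup>2 / 2 \<le> G (u x t)"
  using primitive_ge_if_deriv_bounded[OF F_deriv F0 abs_bound_F'_lip(1)[OF \<alpha>] G_deriv G0] abs_u_le by auto

lemma dsol_square_le: "(dsol t)\<^sup>2 \<le> dist_coeff \<alpha> * (1 + Y t)"
proof -
  have "2 * (Y t + ut2 t) / eps\<^sup>2 \<le> 2 * (Y t + energy_bound \<alpha>) / eps\<^sup>2"
    using ut2_le_energy_bound by (intro divide_right_mono) auto
  then have "(dsol t)\<^sup>2 \<le> 3 * energy_bound \<alpha> + 2 * (Y t + energy_bound \<alpha>) / eps\<^sup>2"
    using dsol_square[OF t] u2_le_energy_bound ux2_le_energy_bound ut2_le_energy_bound uxx2_le[OF t]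
    by linarith
  also have "\<dots> = (3 * energy_bound \<alpha> + 2 * energy_bound \<alpha> / eps\<^sup>2) + 2 / eps\<^sup>2 * Y t"
    by (simp add: add_divide_distrib algebra_simps)
  also have "\<dots> \<le> dist_coeff \<alpha> * 1 + dist_coeff \<alpha> * Y t"
    using energy_bound_nonneg[OF \<alpha>] norms_nonneg(6)[OF t]
    by (intro add_mono mult_right_mono) (auto simp: dist_coeff_def)
  finally show ?thesis by (simp add: distrib_left)
qed

lemma a_bound_at_le: "a_bound_at t + \<bar>a_inf\<bar> \<le> damping_coeff \<alpha> * (1 + Y t) powr (tau / 2)"
proof -
  have Y0: "Y t \<ge> 0" using norms_nonneg[OF t] by simp
  define P where "P = (1 + Y t) powr (tau / 2)"
  have P1: "P \<ge> 1" unfolding P_def using Y0 tau by (intro ge_one_powr_ge_zero) auto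
  have rpow_le: "rpow (dsol t) tau \<le> dist_coeff \<alpha> powr (tau / 2) * P"
  proof (cases "tau = 0")
    case True
    then show ?thesis unfolding rpow_def P_def using Y0 dist_coeff_ge_1[OF \<alpha>] by simp
  next
    case False
    have "((dsol t)\<^sup>2) powr (1/2) = dsol t" using dsol_nonneg[OF t] by (simp add: powr_half_sqrt)
    then have "rpow (dsol t) tau = (((dsol t)\<^sup>2) powr (1/2)) powr tau" unfolding rpow_def using False by simp
    also have "\<dots> = ((dsol t)\<^sup>2) powr (tau / 2)" by (simp only: powr_powr times_divide_eq_left mult_1)
    also have "\<dots> \<le> (dist_coeff \<alpha> * (1 + Y t)) powr (tau / 2)"
      using dsol_square_le tau by (intro powr_mono2) auto
    also have "\<dots> = dist_coeff \<alpha> powr (tau / 2) * P"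
      unfolding P_def using dist_coeff_ge_1[OF \<alpha>] Y0 by (simp add: powr_mult)
    finally show ?thesis .
  qed
  have "a_bound_at t + \<bar>a_inf\<bar> \<le> A * (dist_coeff \<alpha> powr (tau / 2) * P) + A' * P + \<bar>a_inf\<bar> * P"
    unfolding a_bound_at_def using rpow_le A_pos A'_nonneg P1
    by (intro add_mono mult_left_mono) (auto simp: mult_le_cancel_left1)
  also have "\<dots> = damping_coeff \<alpha> * P" unfolding damping_coeff_def by (simp add: algebra_simps)
  finally show ?thesis unfolding P_def .
qed

end

lemma sqrt_damping2_le:
  assumes t: "t > t0"
  shows "sqrt (damping2 t)
           \<le> sqrt (damping_coeff \<alpha> * (excess_dissipation t + \<bar>a_inf\<bar> * energy_bound \<alpha>)) * (1 + Y t) powr (tau / 4)"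
proof -
  have tt: "t \<ge> t0" using t by simp
  have "damping2 t \<le> (a_bound_at t + \<bar>a_inf\<bar>) * (excess_dissipation t + \<bar>a_inf\<bar> * ut2 t)"
    by (rule damping2_le[OF t])
  also have "\<dots> \<le> (damping_coeff \<alpha> * (1 + Y t) powr (tau / 2)) * (excess_dissipation t + \<bar>a_inf\<bar> * energy_bound \<alpha>)"
    using a_bound_at_le[OF tt] ut2_le_energy_bound[OF tt] excess_dissipation_nonneg[OF t] norms_nonneg[OF tt]
      damping_coeff_pos[OF \<alpha>]
    by (intro mult_mono add_left_mono mult_left_mono) auto
  also have "\<dots> = (damping_coeff \<alpha> * (excess_dissipation t + \<bar>a_inf\<bar> * energy_bound \<alpha>)) * (1 + Y t) powr (tau / 2)"
    by (simp only: ac_simps)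
  finally have "sqrt (damping2 t) \<le> sqrt (damping_coeff \<alpha> * (excess_dissipation t + \<bar>a_inf\<bar> * energy_bound \<alpha>))
                                       * sqrt ((1 + Y t) powr (tau / 2))"
    unfolding real_sqrt_mult[symmetric] by (rule real_sqrt_le_mono)
  also have "sqrt ((1 + Y t) powr (tau / 2)) = (1 + Y t) powr (tau / 4)"
    using norms_nonneg[OF tt] by (simp add: powr_half_sqrt_powr[symmetric] powr_powr)
  finally show ?thesis .
qed

text \<open>The growth of \<open>a\<close> enters \<open>Y'\<close> only through \<open>(1 + Y)\<^bsup>\<tau>/4\<^esup>\<close>; multiplied by \<open>\<surd>Y\<close> this is
  sublinear, \<open>(1 + Y)\<^bsup>\<beta>\<^esup>\<close> with \<open>\<beta> < 1\<close>, because \<open>\<tau> < 2\<close>.\<close>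

lemma Y'_le_source:
  assumes t: "t > t0"
  shows "Y' t \<le> - 2 / eps * Y t + (1 + Y t) powr beta * (Y_source \<alpha> + excess_dissipation t)"
proof -
  have tt: "t \<ge> t0" using t by simp
  note nn = norms_nonneg[OF tt] and lip = abs_bound_F'_lip[OF \<alpha>]
  define p where "p = 1 + Y t"
  define X where "X = excess_dissipation t + \<bar>a_inf\<bar> * energy_bound \<alpha>"
  define C where "C = 2 * sqrt (energy_bound \<alpha>) * (1 / eps + lip_F \<alpha>)"
  have p1: "p \<ge> 1" unfolding p_def using nn by simp
  have X0: "X \<ge> 0" unfolding X_def using excess_dissipation_nonneg[OF t] energy_bound_nonneg[OF \<alpha>] by simp
  have C0: "C \<ge> 0" unfolding C_def using lip eps_pos energy_bound_nonneg[OF \<alpha>] by simp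
  have lower_order: "lip_F \<alpha> * sqrt (u2 t) + sqrt (ut2 t) / eps \<le> C / 2"
  proof -
    have "lip_F \<alpha> * sqrt (u2 t) \<le> lip_F \<alpha> * sqrt (energy_bound \<alpha>)"
      using u2_le_energy_bound[OF tt] lip by (simp add: mult_left_mono)
    moreover have "sqrt (ut2 t) / eps \<le> sqrt (energy_bound \<alpha>) / eps"
      using ut2_le_energy_bound[OF tt] eps_pos by (simp add: divide_right_mono)
    ultimately show ?thesis unfolding C_def by (simp add: algebra_simps add_divide_distrib)
  qed
  have "Y' t \<le> - 2 / eps * Y t + 2 * sqrt (Y t) * (sqrt (damping2 t) + lip_F \<alpha> * sqrt (u2 t) + sqrt (ut2 t) / eps)"
    by (rule Y'_le[OF tt abs_F_u_le[OF tt] lip(2)])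
  also have "2 * sqrt (Y t) * (sqrt (damping2 t) + lip_F \<alpha> * sqrt (u2 t) + sqrt (ut2 t) / eps)
      \<le> 2 * p powr (1/2) * (sqrt (damping_coeff \<alpha> * X) * p powr (tau / 4) + C / 2)"
  proof -
    have "sqrt (damping2 t) + lip_F \<alpha> * sqrt (u2 t) + sqrt (ut2 t) / eps
            \<le> sqrt (damping_coeff \<alpha> * X) * p powr (tau / 4) + C / 2"
      using sqrt_damping2_le[OF t] lower_order unfolding p_def X_def by linarith
    moreover have "sqrt (Y t) \<le> p powr (1/2)" unfolding p_def using nn by (simp add: powr_half_sqrt)
    moreover have "0 \<le> sqrt (damping2 t) + lip_F \<alpha> * sqrt (u2 t) + sqrt (ut2 t) / eps"
      using lip eps_pos nn by simp
    ultimately show ?thesis using nn by (intro mult_mono) auto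
  qed
  also have "\<dots> = p powr (1/2) * p powr (tau / 4) * (2 * sqrt (damping_coeff \<alpha> * X)) + p powr (1/2) * C"
    by (simp add: algebra_simps)
  also have "\<dots> \<le> p powr beta * (damping_coeff \<alpha> + X) + p powr beta * C"
  proof -
    have "p powr (1/2) * p powr (tau / 4) = p powr beta" unfolding beta_def by (simp add: powr_add[symmetric])
    moreover have "p powr (1/2) \<le> p powr beta" using p1 beta_bounds by (intro powr_mono) auto
    moreover have "2 * sqrt (damping_coeff \<alpha> * X) \<le> damping_coeff \<alpha> + X"
      using arith_geo_mean_sqrt[of "damping_coeff \<alpha>" X] damping_coeff_pos[OF \<alpha>] X0 by simp
    ultimately show ?thesis using C0 by (intro add_mono mult_right_mono) (auto intro: mult_left_mono)
  qed
  also have "\<dots> = p powr beta * (Y_source \<alpha> + excess_dissipation t)"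
    unfolding Y_source_def X_def C_def by (simp add: algebra_simps)
  finally show ?thesis unfolding p_def by simp
qed

lemma Z'_le:
  assumes t: "t > t0"
  shows "Z' t \<le> (1 - beta) * (- 2 / eps * (Z t - 1) + Y_source \<alpha> + excess_dissipation t)"
proof -
  have tt: "t \<ge> t0" using t by simp
  define p where "p = 1 + Y t"
  have p1: "p \<ge> 1" unfolding p_def using norms_nonneg[OF tt] by simp
  have b: "1 - beta > 0" using beta_bounds by simp
  have "p powr (- beta) \<le> p powr 0" using p1 beta_bounds by (intro powr_mono) auto
  then have q1: "p powr (- beta) \<le> 1" using p1 by simp
  have "Z' t \<le> (1 - beta) * p powr (- beta)
                 * (- 2 / eps * Y t + p powr beta * (Y_source \<alpha> + excess_dissipation t))"
    unfolding Z'_def p_def using Y'_le_source[OF t] b by (intro mult_left_mono) auto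
  also have "\<dots> = (1 - beta) * (- 2 / eps * (Y t * p powr (- beta))
                     + (p powr (- beta) * p powr beta) * (Y_source \<alpha> + excess_dissipation t))"
    by algebra
  also have "p powr (- beta) * p powr beta = 1" using p1 by (simp add: powr_add[symmetric])
  also have "Y t * p powr (- beta) = Z t - p powr (- beta)"
  proof -
    have "Y t * p powr (- beta) = p * p powr (- beta) - p powr (- beta)"
      unfolding p_def by (simp add: algebra_simps)
    also have "p * p powr (- beta) = Z t"
      unfolding Z_def p_def[symmetric] using p1 powr_add[of p 1 "- beta"] by simp
    finally show ?thesis .
  qed
  also have "(1 - beta) * (- 2 / eps * (Z t - p powr (- beta)) + 1 * (Y_source \<alpha> + excess_dissipation t))
              \<le> (1 - beta) * (- 2 / eps * (Z t - 1) + Y_source \<alpha> + excess_dissipation t)"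
  proof -
    have "- 2 / eps * (Z t - p powr (- beta)) \<le> - 2 / eps * (Z t - 1)"
      using q1 eps_pos by (intro mult_left_mono_neg) auto
    then show ?thesis using b by (intro mult_left_mono) auto
  qed
  finally show ?thesis .
qed

text \<open>\<open>(1 - \<beta>) \<cdot> energy\<close> absorbs the dissipation term of \<open>Z'\<close>, so this combination decays towards
  a constant; this is the a priori bound on \<open>Y\<close> and hence on \<open>d\<close>.\<close>

lemma Z_energy_decay:
  assumes "t \<ge> t0"
  shows "Z t + (1 - beta) * energy t - Z_offset \<alpha>
           \<le> exp (- (2 * (1 - beta) / eps) * (t - t0)) * (Z t0 + (1 - beta) * energy t0 - Z_offset \<alpha>)"
proof (rule exp_decay_if_deriv_le[where g' = "\<lambda>t. Z' t + (1 - beta) * energy' t", OF _ _ assms])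
  show "\<forall>t\<in>{t0..}. ((\<lambda>t. Z t + (1 - beta) * energy t - Z_offset \<alpha>) has_real_derivative
                      Z' t + (1 - beta) * energy' t) (at t within {t0..})"
    using Z_deriv energy_deriv by (auto intro!: derivative_eq_intros)
  show "\<forall>t>t0. Z' t + (1 - beta) * energy' t
                  \<le> - (2 * (1 - beta) / eps) * (Z t + (1 - beta) * energy t - Z_offset \<alpha>)"
  proof (intro allI impI)
    fix t assume t: "t > t0"
    have tt: "t \<ge> t0" using t by simp
    have b: "0 < 1 - beta" "1 - beta \<le> 1" using beta_bounds by auto
    have "kappa * utx2 t \<ge> 0" using kappa_pos norms_nonneg(5)[OF tt] by simp
    then have "energy' t \<le> - excess_dissipation t" using energy'_le[OF t] by linarith
    then have "(1 - beta) * energy' t \<le> (1 - beta) * (- excess_dissipation t)"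
      using b by (intro mult_left_mono) auto
    then have "Z' t + (1 - beta) * energy' t \<le> (1 - beta) * (- 2 / eps * (Z t - 1) + Y_source \<alpha>)"
      using Z'_le[OF t] by (simp add: algebra_simps)
    also have "\<dots> \<le> - (2 * (1 - beta) / eps) * (Z t + (1 - beta) * energy t - Z_offset \<alpha>)"
    proof -
      have "(1 - beta) * energy t \<le> energy_coeff \<alpha> * \<alpha>\<^sup>2"
        using mult_right_mono[OF b(2) energy_nonneg[OF tt]] energy_le_coeff[OF tt] by simp
      then have "0 \<le> (1 - beta) * (2 / eps) * (energy_coeff \<alpha> * \<alpha>\<^sup>2 - (1 - beta) * energy t)"
        using b eps_pos by simp
      moreover have "- (2 * (1 - beta) / eps) * (Z t + (1 - beta) * energy t - Z_offset \<alpha>)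
                       - (1 - beta) * (- 2 / eps * (Z t - 1) + Y_source \<alpha>)
                     = (1 - beta) * (2 / eps) * (energy_coeff \<alpha> * \<alpha>\<^sup>2 - (1 - beta) * energy t)"
        unfolding Z_offset_def using eps_pos by (simp add: field_simps)
      ultimately show ?thesis by (metis diff_ge_0_iff_ge)
    qed
    finally show "Z' t + (1 - beta) * energy' t
                    \<le> - (2 * (1 - beta) / eps) * (Z t + (1 - beta) * energy t - Z_offset \<alpha>)" .
  qed
qed

lemma Z_le_Z_bound:
  assumes t: "t \<ge> t0"
  shows "Z t \<le> Z_bound \<alpha>"
proof -
  note nn = norms_nonneg[OF order.refl]
  have "Y t0 \<le> 2 * eps\<^sup>2 * uxx2 t0 + 2 * ut2 t0" by (rule Y_le[OF order.refl])
  also have "\<dots> \<le> 2 * (eps\<^sup>2 + 1) * (dsol t0)\<^sup>2" 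
    unfolding dsol_square[OF order.refl] using nn by (simp add: algebra_simps)
  also have "\<dots> \<le> 2 * (eps\<^sup>2 + 1) * \<alpha>\<^sup>2"
    using d0 dsol_nonneg[OF order.refl] by (intro mult_left_mono power_mono) auto
  finally have Y0: "Y t0 \<le> 2 * (eps\<^sup>2 + 1) * \<alpha>\<^sup>2" .
  have "Z t0 \<le> (1 + Y t0) powr 1" unfolding Z_def using beta_bounds nn by (intro powr_mono) auto
  then have Z0: "Z t0 \<le> 1 + Y t0" using nn by simp
  have E0: "(1 - beta) * energy t0 \<le> energy_coeff \<alpha> * \<alpha>\<^sup>2"
    using mult_right_mono[of "1 - beta" 1, OF _ energy_nonneg[OF order.refl]] beta_bounds energy_t0_le by simp
  define \<Theta>0 where "\<Theta>0 = Z t0 + (1 - beta) * energy t0 - Z_offset \<alpha>"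
  define E where "E = exp (- (2 * (1 - beta) / eps) * (t - t0))"
  have "E \<le> 1" unfolding E_def using beta_bounds eps_pos t by simp
  then have "E * \<Theta>0 \<le> max 0 \<Theta>0"
    by (cases "\<Theta>0 \<ge> 0") (auto simp: E_def mult_left_le_one_le mult_nonneg_nonpos)
  then have "Z t + (1 - beta) * energy t \<le> max 0 \<Theta>0 + Z_offset \<alpha>"
    using Z_energy_decay[OF t] unfolding E_def \<Theta>0_def by linarith
  moreover have "Z t \<le> Z t + (1 - beta) * energy t" using beta_bounds energy_nonneg[OF t] by simp
  ultimately have "Z t \<le> max 0 \<Theta>0 + Z_offset \<alpha>" by linarith
  also have "\<dots> \<le> Z_bound \<alpha>" unfolding Z_bound_def \<Theta>0_def using Y0 Z0 E0 by auto
  finally show ?thesis .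
qed

lemma one_plus_Y_le: "t \<ge> t0 \<Longrightarrow> 1 + Y t \<le> Y_bound \<alpha>"
proof -
  assume t: "t \<ge> t0"
  have b: "1 - beta > 0" using beta_bounds by simp
  have "((1 + Y t) powr (1 - beta)) powr (1 / (1 - beta)) \<le> Z_bound \<alpha> powr (1 / (1 - beta))"
    using Z_le_Z_bound[OF t] b norms_nonneg[OF t] unfolding Z_def by (intro powr_mono2) auto
  then show ?thesis unfolding Y_bound_def using b norms_nonneg[OF t] by (simp add: powr_powr)
qed

lemma a_bound_at_le_damping_bound: "t \<ge> t0 \<Longrightarrow> a_bound_at t + \<bar>a_inf\<bar> \<le> damping_bound \<alpha>"
proof -
  assume t: "t \<ge> t0"
  have "a_bound_at t + \<bar>a_inf\<bar> \<le> damping_coeff \<alpha> * (1 + Y t) powr (tau / 2)" by (rule a_bound_at_le[OF t])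
  also have "\<dots> \<le> damping_coeff \<alpha> * Y_bound \<alpha> powr (tau / 2)"
    using one_plus_Y_le[OF t] norms_nonneg[OF t] tau damping_coeff_pos[OF \<alpha>]
    by (intro mult_left_mono powr_mono2) auto
  finally show ?thesis unfolding damping_bound_def .
qed

end

section \<open>The Lyapunov functional\<close>

definition "V \<alpha> t = energy t + delta \<alpha> * J t + gamma \<alpha> * Y t"
definition "V' \<alpha> t = energy' t + delta \<alpha> * J' t + gamma \<alpha> * Y' t"

lemma V_deriv: "t \<ge> t0 \<Longrightarrow> (V \<alpha> has_real_derivative V' \<alpha> t) (at t within {t0..})"
  unfolding V_def[abs_def] V'_def using energy_deriv J_deriv Y_deriv
  by (intro DERIV_add DERIV_cmult) auto

context
  fixes \<alpha> :: real
  assumes \<alpha>: "\<alpha> > 0" and d0: "dsol t0 \<le> \<alpha>"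
begin

lemma V_ge:
  assumes t: "t \<ge> t0"
  shows "V_lower \<alpha> * (ut2 t + ux2 t + Y t) \<le> V \<alpha> t"
proof -
  note nn = norms_nonneg[OF t]
  have dp: "delta \<alpha> > 0" "gamma \<alpha> > 0" using delta_pos[OF \<alpha>] gamma_pos[OF \<alpha>] by auto
  have "delta \<alpha> * \<bar>u_ut t\<bar> \<le> (k_F / 2) * ((ux2 t + ut2 t) / 2)"
    using abs_u_ut_le_half[OF t] delta_le(1)[OF \<alpha>] dp by (intro mult_mono) auto
  moreover have "delta \<alpha> * (- \<bar>u_ut t\<bar>) \<le> delta \<alpha> * u_ut t" using dp by (intro mult_left_mono) auto
  moreover have "V \<alpha> t = energy t + delta \<alpha> * u_ut t + delta \<alpha> * (eps / 2) * ux2 t + gamma \<alpha> * Y t"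
    unfolding V_def J_def using minus_u_uxx_eq[OF t] by (simp add: algebra_simps)
  moreover have "0 \<le> delta \<alpha> * (eps / 2) * ux2 t" using dp eps_pos nn by simp
  moreover have "V_lower \<alpha> \<le> 1 / 4" "V_lower \<alpha> \<le> k_F / 4" "V_lower \<alpha> \<le> gamma \<alpha>"
    unfolding V_lower_def using k_F_le_1 by auto
  then have "V_lower \<alpha> * ut2 t \<le> 1 / 4 * ut2 t" "V_lower \<alpha> * ux2 t \<le> k_F / 4 * ux2 t"
    "V_lower \<alpha> * Y t \<le> gamma \<alpha> * Y t"
    using mult_right_mono nn by blast+
  moreover have "k_F / 4 * ut2 t \<le> 1 / 4 * ut2 t" using k_F_le_1 nn by (intro mult_right_mono) auto
  ultimately show ?thesis using energy_ge[OF t] by (simp add: algebra_simps)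
qed

lemma V_le:
  assumes t: "t \<ge> t0"
  shows "V \<alpha> t \<le> V_upper \<alpha> * (ut2 t + ux2 t + Y t)"
proof -
  note nn = norms_nonneg[OF t] and lip = abs_bound_F'_lip(2)[OF \<alpha>]
  have dp: "0 < delta \<alpha>" "delta \<alpha> \<le> 1 / 2" "0 < gamma \<alpha>"
    using delta_pos[OF \<alpha>] delta_le(1)[OF \<alpha>] k_F_le_1 gamma_pos[OF \<alpha>] by auto
  have "energy t \<le> ut2 t / 2 + ux2 t / 2 + lip_F \<alpha> / 2 * u2 t"
    by (rule energy_le_if_G_ge[OF t]) (use G_u_ge[OF \<alpha> d0 t] in auto)
  moreover have "lip_F \<alpha> / 2 * u2 t \<le> lip_F \<alpha> / 2 * ux2 t"
    using u2_le_ux2[OF t] lip by (intro mult_left_mono) auto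
  moreover have "delta \<alpha> * J t \<le> ux2 t / 4 + ut2 t / 4 + eps * ux2 t / 4"
  proof -
    have "J t \<le> (ux2 t + ut2 t) / 2 + eps / 2 * ux2 t"
      unfolding J_def using minus_u_uxx_eq[OF t] abs_u_ut_le_half[OF t] by simp
    then have "delta \<alpha> * J t \<le> delta \<alpha> * ((ux2 t + ut2 t) / 2 + eps / 2 * ux2 t)"
      using dp by (intro mult_left_mono) auto
    also have "\<dots> \<le> 1 / 2 * ((ux2 t + ut2 t) / 2 + eps / 2 * ux2 t)"
      using dp nn eps_pos by (intro mult_right_mono) auto
    finally show ?thesis by (simp add: field_simps)
  qed
  moreover have "V_upper \<alpha> * (ut2 t + ux2 t + Y t)
      = ut2 t + ux2 t + lip_F \<alpha> * ux2 t + eps * ux2 t + gamma \<alpha> * ux2 t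
        + (lip_F \<alpha> + eps + gamma \<alpha>) * ut2 t + (1 + lip_F \<alpha> + eps) * Y t + gamma \<alpha> * Y t"
    unfolding V_upper_def by (simp add: algebra_simps)
  moreover have "0 \<le> gamma \<alpha> * ux2 t" "0 \<le> (lip_F \<alpha> + eps + gamma \<alpha>) * ut2 t"
    "0 \<le> (1 + lip_F \<alpha> + eps) * Y t" "0 \<le> eps * ux2 t" "0 \<le> lip_F \<alpha> * ux2 t"
    using dp nn lip eps_pos by auto
  moreover have "lip_F \<alpha> / 2 * ux2 t = lip_F \<alpha> * ux2 t / 2" by simp
  ultimately show ?thesis unfolding V_def using nn by linarith
qed

lemma damping2_le_excess: "t > t0 \<Longrightarrow> damping2 t \<le> damping_bound \<alpha> * excess_dissipation t
                                                   + damping_bound \<alpha> * \<bar>a_inf\<bar> * ut2 t"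
proof -
  assume t: "t > t0"
  then have "damping2 t \<le> (a_bound_at t + \<bar>a_inf\<bar>) * (excess_dissipation t + \<bar>a_inf\<bar> * ut2 t)"
    by (rule damping2_le)
  also have "\<dots> \<le> damping_bound \<alpha> * (excess_dissipation t + \<bar>a_inf\<bar> * ut2 t)"
    using a_bound_at_le_damping_bound[OF \<alpha> d0] excess_dissipation_nonneg[OF t] norms_nonneg[of t] t
    by (intro mult_right_mono) auto
  finally show ?thesis by (simp add: algebra_simps)
qed

lemma delta_J'_le:
  assumes t: "t \<ge> t0"
  shows "delta \<alpha> * J' t \<le> delta \<alpha> * ut2 t - delta \<alpha> * k_F / 2 * ux2 t
                             + delta \<alpha> / (2 * k_F * pi\<^sup>2) * damping2 t"
proof -
  note nn = norms_nonneg[OF t]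
  have kp: "k_F * pi\<^sup>2 > 0" using k_F_pos by simp
  have "sqrt ((k_F * pi\<^sup>2 * u2 t) * (damping2 t / (k_F * pi\<^sup>2)))
          \<le> (k_F * pi\<^sup>2 * u2 t + damping2 t / (k_F * pi\<^sup>2)) / 2"
    using kp nn by (intro arith_geo_mean_sqrt) auto
  moreover have "(k_F * pi\<^sup>2 * u2 t) * (damping2 t / (k_F * pi\<^sup>2)) = u2 t * damping2 t"
    using k_F_pos by simp
  moreover have "k_F * pi\<^sup>2 * u2 t \<le> k_F * ux2 t"
    using wirtinger_u[OF t] k_F_pos by (simp add: mult.assoc mult_left_mono)
  moreover have "(k_F * ux2 t + damping2 t / (k_F * pi\<^sup>2)) / 2
                   = k_F / 2 * ux2 t + 1 / (2 * k_F * pi\<^sup>2) * damping2 t"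
    by simp
  ultimately have "sqrt (u2 t) * sqrt (damping2 t) \<le> k_F / 2 * ux2 t + 1 / (2 * k_F * pi\<^sup>2) * damping2 t"
    by (simp add: real_sqrt_mult)
  then have "J' t \<le> ut2 t - k_F / 2 * ux2 t + 1 / (2 * k_F * pi\<^sup>2) * damping2 t"
    using J'_le[OF t] by simp
  then have "delta \<alpha> * J' t \<le> delta \<alpha> * (ut2 t - k_F / 2 * ux2 t + 1 / (2 * k_F * pi\<^sup>2) * damping2 t)"
    using delta_pos[OF \<alpha>] by (intro mult_left_mono) auto
  then show ?thesis by (simp add: algebra_simps)
qed

lemma gamma_Y'_le:
  assumes t: "t > t0"
  shows "gamma \<alpha> * Y' t \<le> - gamma \<alpha> / eps * Y t + 3 * gamma \<alpha> * eps * damping2 t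
           + 3 * gamma \<alpha> * eps * (lip_F \<alpha>)\<^sup>2 / pi\<^sup>2 * ux2 t + 3 * gamma \<alpha> / eps * ut2 t"
proof -
  have tt: "t \<ge> t0" using t by simp
  note nn = norms_nonneg[OF tt]
  define L where "L = lip_F \<alpha>"
  define S where "S = sqrt (damping2 t) + L * sqrt (u2 t) + sqrt (ut2 t) / eps"
  have L0: "L \<ge> 0" unfolding L_def by (rule abs_bound_F'_lip(2)[OF \<alpha>])
  have S0: "S \<ge> 0" unfolding S_def using L0 eps_pos nn by simp
  have Y'_S: "Y' t \<le> - 2 / eps * Y t + 2 * sqrt (Y t) * S"
    unfolding S_def L_def by (rule Y'_le[OF tt abs_F_u_le[OF \<alpha> d0 tt] abs_bound_F'_lip(2)[OF \<alpha>]])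
  have "sqrt ((Y t / eps) * (eps * S\<^sup>2)) \<le> (Y t / eps + eps * S\<^sup>2) / 2"
    using nn eps_pos by (intro arith_geo_mean_sqrt) auto
  then have Y_S: "2 * sqrt (Y t) * S \<le> Y t / eps + eps * S\<^sup>2"
    using eps_pos S0 by (simp add: real_sqrt_mult)
  have "S\<^sup>2 \<le> 3 * ((sqrt (damping2 t))\<^sup>2 + (L * sqrt (u2 t))\<^sup>2 + (sqrt (ut2 t) / eps)\<^sup>2)"
    unfolding S_def by (rule square_sum3_le)
  also have "\<dots> = 3 * (damping2 t + L\<^sup>2 * u2 t + ut2 t / eps\<^sup>2)"
    using nn by (simp add: power_mult_distrib power_divide)
  also have "\<dots> \<le> 3 * (damping2 t + L\<^sup>2 * (ux2 t / pi\<^sup>2) + ut2 t / eps\<^sup>2)"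
  proof -
    have "u2 t \<le> ux2 t / pi\<^sup>2" using wirtinger_u[OF tt] by (simp add: field_simps)
    then show ?thesis using mult_left_mono[of "u2 t" "ux2 t / pi\<^sup>2" "L\<^sup>2"] by simp
  qed
  finally have "eps * S\<^sup>2 \<le> eps * (3 * (damping2 t + L\<^sup>2 * (ux2 t / pi\<^sup>2) + ut2 t / eps\<^sup>2))"
    using eps_pos by (intro mult_left_mono) auto
  also have "\<dots> = 3 * eps * damping2 t + 3 * eps * L\<^sup>2 / pi\<^sup>2 * ux2 t + 3 / eps * ut2 t"
    using eps_pos by (simp add: field_simps power2_eq_square)
  finally have "eps * S\<^sup>2 \<le> 3 * eps * damping2 t + 3 * eps * L\<^sup>2 / pi\<^sup>2 * ux2 t + 3 / eps * ut2 t" .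
  moreover have "- 2 / eps * Y t + Y t / eps = - Y t / eps" by (simp add: field_simps)
  ultimately have "Y' t \<le> - Y t / eps + 3 * eps * damping2 t + 3 * eps * L\<^sup>2 / pi\<^sup>2 * ux2 t + 3 / eps * ut2 t"
    using Y'_S Y_S by linarith
  then have "gamma \<alpha> * Y' t
               \<le> gamma \<alpha> * (- Y t / eps + 3 * eps * damping2 t + 3 * eps * L\<^sup>2 / pi\<^sup>2 * ux2 t + 3 / eps * ut2 t)"
    using gamma_pos[OF \<alpha>] by (intro mult_left_mono) auto
  then show ?thesis unfolding L_def by (simp add: algebra_simps)
qed


text \<open>The weights \<open>delta\<close> and \<open>gamma\<close> are small enough that the damping term, controlled by
  \<open>excess_dissipation\<close> through \<open>damping_bound\<close>, and the positive terms of \<open>J'\<close> and \<open>Y'\<close> are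
  absorbed by the dissipation of the energy.\<close>

lemma V'_le:
  assumes t: "t > t0"
  shows "V' \<alpha> t \<le> - V_dissipation \<alpha> * (ut2 t + ux2 t + Y t)"
proof -
  have tt: "t \<ge> t0" using t by simp
  note nn = norms_nonneg[OF tt]
  define d g where "d = delta \<alpha>" and "g = gamma \<alpha>"
  define c where "c = d / (2 * k_F * pi\<^sup>2) + 3 * g * eps"
  have "c * damping2 t \<le> c * (damping_bound \<alpha> * excess_dissipation t + damping_bound \<alpha> * \<bar>a_inf\<bar> * ut2 t)"
    using damping2_le_excess[OF t] delta_pos[OF \<alpha>] gamma_pos[OF \<alpha>] k_F_pos eps_pos
    unfolding c_def d_def g_def by (intro mult_left_mono) auto
  also have "\<dots> = (c * damping_bound \<alpha>) * excess_dissipation t + c * damping_bound \<alpha> * \<bar>a_inf\<bar> * ut2 t"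
    by (simp add: algebra_simps)
  also have "(c * damping_bound \<alpha>) * excess_dissipation t \<le> 1 / 2 * excess_dissipation t"
    using damping_weight_le[OF \<alpha>] excess_dissipation_nonneg[OF t]
    unfolding c_def d_def g_def by (intro mult_right_mono) auto
  finally have damping_absorbed:
    "c * damping2 t \<le> excess_dissipation t / 2 + c * damping_bound \<alpha> * \<bar>a_inf\<bar> * ut2 t" by simp
  have "(d + 3 * g / eps + c * damping_bound \<alpha> * \<bar>a_inf\<bar>) * ut2 t \<le> kappa * pi\<^sup>2 / 2 * ut2 t"
    using ut2_weight_le[OF \<alpha>] nn unfolding c_def d_def g_def by (intro mult_right_mono) auto
  then have ut2_absorbed:
    "d * ut2 t + 3 * g / eps * ut2 t + c * damping_bound \<alpha> * \<bar>a_inf\<bar> * ut2 t \<le> kappa * pi\<^sup>2 / 2 * ut2 t"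
    by (simp add: algebra_simps)
  have "3 * g * eps * (lip_F \<alpha>)\<^sup>2 / pi\<^sup>2 * ux2 t \<le> d * k_F / 4 * ux2 t"
    using ux2_weight_le[OF \<alpha>] nn unfolding d_def g_def by (intro mult_right_mono) auto
  then have ux2_absorbed: "3 * g * eps * (lip_F \<alpha>)\<^sup>2 / pi\<^sup>2 * ux2 t \<le> d * k_F * ux2 t / 4" by simp
  have "kappa * (pi\<^sup>2 * ut2 t) \<le> kappa * utx2 t"
    using wirtinger_ut[OF tt] kappa_pos by (intro mult_left_mono) auto
  then have ut2_utx2: "kappa * pi\<^sup>2 / 2 * ut2 t \<le> kappa * utx2 t / 2" by simp
  have J'_d: "d * J' t \<le> d * ut2 t - d * k_F * ux2 t / 2 + d / (2 * k_F * pi\<^sup>2) * damping2 t"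
    using delta_J'_le[OF tt] unfolding d_def by simp
  have "c * damping2 t = d / (2 * k_F * pi\<^sup>2) * damping2 t + 3 * g * eps * damping2 t"
    unfolding c_def by (simp add: algebra_simps)
  then have "V' \<alpha> t \<le> - (kappa * pi\<^sup>2 / 2 * ut2 t) - d * k_F * ux2 t / 4 - g / eps * Y t"
    using energy'_le[OF t] J'_d gamma_Y'_le[OF t] damping_absorbed ut2_absorbed ux2_absorbed
      ut2_utx2 excess_dissipation_nonneg[OF t]
    unfolding V'_def d_def[symmetric] g_def[symmetric] by linarith
  moreover have "V_dissipation \<alpha> \<le> kappa * pi\<^sup>2 / 2" "V_dissipation \<alpha> \<le> d * k_F / 4"
    "V_dissipation \<alpha> \<le> g / eps"
    unfolding V_dissipation_def d_def g_def
    by (rule min.coboundedI1[OF min.cobounded1], rule min.coboundedI1[OF min.cobounded2], rule min.cobounded2)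
  then have "V_dissipation \<alpha> * ut2 t \<le> kappa * pi\<^sup>2 / 2 * ut2 t"
    "V_dissipation \<alpha> * ux2 t \<le> d * k_F / 4 * ux2 t" "V_dissipation \<alpha> * Y t \<le> g / eps * Y t"
    using mult_right_mono nn by blast+
  moreover have "- V_dissipation \<alpha> * (ut2 t + ux2 t + Y t)
                   = - (V_dissipation \<alpha> * ut2 t) - V_dissipation \<alpha> * ux2 t - V_dissipation \<alpha> * Y t"
    "d * k_F / 4 * ux2 t = d * k_F * ux2 t / 4"
    by (simp_all add: algebra_simps)
  ultimately show ?thesis by linarith
qed

lemma V_decay:
  assumes t: "t \<ge> t0"
  shows "V \<alpha> t \<le> exp (- (V_dissipation \<alpha> / V_upper \<alpha>) * (t - t0)) * V \<alpha> t0"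
proof (rule exp_decay_if_deriv_le[where g' = "V' \<alpha>", OF _ _ t])
  show "\<forall>t\<in>{t0..}. (V \<alpha> has_real_derivative V' \<alpha> t) (at t within {t0..})" using V_deriv by auto
  show "\<forall>t>t0. V' \<alpha> t \<le> - (V_dissipation \<alpha> / V_upper \<alpha>) * V \<alpha> t"
  proof (intro allI impI)
    fix s assume s: "s > t0"
    have "V_dissipation \<alpha> / V_upper \<alpha> * V \<alpha> s \<le> V_dissipation \<alpha> / V_upper \<alpha> * (V_upper \<alpha> * (ut2 s + ux2 s + Y s))"
      using V_le[of s] s V_consts_pos[OF \<alpha>] by (intro mult_left_mono) auto
    also have "\<dots> = V_dissipation \<alpha> * (ut2 s + ux2 s + Y s)" using V_consts_pos[OF \<alpha>] by simp
    finally show "V' \<alpha> s \<le> - (V_dissipation \<alpha> / V_upper \<alpha>) * V \<alpha> s" using V'_le[OF s] by simp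
  qed
qed

lemma dsol_square_le_V:
  assumes t: "t \<ge> t0"
  shows "(dsol t)\<^sup>2 \<le> (2 + 2 / eps\<^sup>2) / V_lower \<alpha> * V \<alpha> t"
proof -
  note nn = norms_nonneg[OF t]
  have "(dsol t)\<^sup>2 \<le> (2 + 2 / eps\<^sup>2) * (ut2 t + ux2 t + Y t)"
  proof -
    have "(2 + 2 / eps\<^sup>2) * (ut2 t + ux2 t + Y t)
            = 2 * ux2 t + 2 * Y t + ut2 t + (ut2 t + 2 * (Y t + ut2 t) / eps\<^sup>2) + 2 / eps\<^sup>2 * ux2 t"
      by (simp add: algebra_simps add_divide_distrib)
    moreover have "0 \<le> 2 / eps\<^sup>2 * ux2 t" using nn by simp
    ultimately show ?thesis using dsol_square[OF t] uxx2_le[OF t] u2_le_ux2[OF t] nn by linarith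
  qed
  also have "\<dots> \<le> (2 + 2 / eps\<^sup>2) * (V \<alpha> t / V_lower \<alpha>)"
    using V_ge[OF t] V_consts_pos[OF \<alpha>] by (intro mult_left_mono) (auto simp: field_simps)
  finally show ?thesis by simp
qed

lemma V_t0_le: "V \<alpha> t0 \<le> V_upper \<alpha> * (3 + 2 * eps\<^sup>2) * (dsol t0)\<^sup>2"
proof -
  note nn = norms_nonneg[OF order.refl]
  have "(3 + 2 * eps\<^sup>2) * (dsol t0)\<^sup>2 = 3 * u2 t0 + 3 * ux2 t0 + 3 * uxx2 t0 + 3 * ut2 t0
          + 2 * eps\<^sup>2 * u2 t0 + 2 * eps\<^sup>2 * ux2 t0 + 2 * eps\<^sup>2 * uxx2 t0 + 2 * eps\<^sup>2 * ut2 t0"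
    unfolding dsol_square[OF order.refl] by (simp add: algebra_simps)
  moreover have "0 \<le> 2 * eps\<^sup>2 * u2 t0" "0 \<le> 2 * eps\<^sup>2 * ux2 t0" "0 \<le> 2 * eps\<^sup>2 * ut2 t0"
    using nn by auto
  ultimately have "ut2 t0 + ux2 t0 + Y t0 \<le> (3 + 2 * eps\<^sup>2) * (dsol t0)\<^sup>2"
    using Y_le[OF order.refl] nn by linarith
  then have "V_upper \<alpha> * (ut2 t0 + ux2 t0 + Y t0) \<le> V_upper \<alpha> * ((3 + 2 * eps\<^sup>2) * (dsol t0)\<^sup>2)"
    using V_consts_pos[OF \<alpha>] by (intro mult_left_mono) auto
  then show ?thesis using V_le[OF order.refl] by (simp add: mult.assoc)
qed

lemma dsol_exp_decay:
  assumes t: "t \<ge> t0"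
  shows "dsol t \<le> decay_factor \<alpha> * exp (- decay_rate \<alpha> * (t - t0)) * dsol t0"
proof -
  define E where "E = exp (- decay_rate \<alpha> * (t - t0))"
  have E2: "E\<^sup>2 = exp (- (V_dissipation \<alpha> / V_upper \<alpha>) * (t - t0))"
    unfolding E_def decay_rate_def using V_consts_pos[OF \<alpha>]
    by (simp add: power2_eq_square exp_add[symmetric] field_simps)
  have D2: "(decay_factor \<alpha>)\<^sup>2 = (2 + 2 / eps\<^sup>2) / V_lower \<alpha> * (V_upper \<alpha> * (3 + 2 * eps\<^sup>2))"
    unfolding decay_factor_def using V_consts_pos[OF \<alpha>] by (simp add: add_pos_nonneg)
  have c0: "(2 + 2 / eps\<^sup>2) / V_lower \<alpha> \<ge> 0" using V_consts_pos[OF \<alpha>] by simp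
  have "(dsol t)\<^sup>2 \<le> (2 + 2 / eps\<^sup>2) / V_lower \<alpha> * V \<alpha> t" by (rule dsol_square_le_V[OF t])
  also have "\<dots> \<le> (2 + 2 / eps\<^sup>2) / V_lower \<alpha> * (E\<^sup>2 * V \<alpha> t0)"
    using V_decay[OF t] c0 unfolding E2 by (intro mult_left_mono) auto
  also have "\<dots> \<le> (2 + 2 / eps\<^sup>2) / V_lower \<alpha> * (E\<^sup>2 * (V_upper \<alpha> * (3 + 2 * eps\<^sup>2) * (dsol t0)\<^sup>2))"
    using V_t0_le c0 by (intro mult_left_mono) auto
  also have "\<dots> = (decay_factor \<alpha> * E * dsol t0)\<^sup>2"
    by (simp only: power_mult_distrib D2) (simp add: algebra_simps)
  finally have "(dsol t)\<^sup>2 \<le> (decay_factor \<alpha> * E * dsol t0)\<^sup>2" .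
  then show ?thesis unfolding E_def
    by (rule power2_le_imp_le) (use dsol_nonneg[OF order.refl] decay_factor_pos[OF \<alpha>] in simp)
qed

end

end

context damped_wave
begin

lemma damped_wave_solution_if_is_solution:
  assumes "t0 \<ge> 0" "is_solution eps F a t0 u ux uxx ut"
  obtains utt uxxt where "damped_wave_solution eps K A A' tau F F' a t0 u ux uxx ut utt uxxt"
  using assms unfolding is_solution_def damped_wave_solution_def damped_wave_solution_axioms_def
  using damped_wave_axioms by blast

theorem exp_stable_large: "exp_stable_large eps F a"
  unfolding exp_stable_large_def
proof (intro allI impI exI conjI)
  fix \<alpha> :: real
  assume \<alpha>: "\<alpha> > 0"
  show "decay_factor \<alpha> > 0" "decay_rate \<alpha> > 0"
    using decay_factor_pos[OF \<alpha>] decay_rate_pos[OF \<alpha>] .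
  fix t0 t :: real and u ux uxx ut :: "real \<Rightarrow> real \<Rightarrow> real"
  assume "t0 \<ge> 0" and sol: "is_solution eps F a t0 u ux uxx ut
                \<and> dG (\<lambda>x. u x t0) (\<lambda>x. ux x t0) (\<lambda>x. uxx x t0) (\<lambda>x. ut x t0) \<le> \<alpha>"
    and "t \<ge> t0"
  then obtain utt uxxt where "damped_wave_solution eps K A A' tau F F' a t0 u ux uxx ut utt uxxt"
    using damped_wave_solution_if_is_solution by blast
  then interpret damped_wave_solution eps K A A' tau F F' a t0 u ux uxx ut utt uxxt .
  show "dG (\<lambda>x. u x t) (\<lambda>x. ux x t) (\<lambda>x. uxx x t) (\<lambda>x. ut x t)
          \<le> decay_factor \<alpha> * exp (- decay_rate \<alpha> * (t - t0))
               * dG (\<lambda>x. u x t0) (\<lambda>x. ux x t0) (\<lambda>x. uxx x t0) (\<lambda>x. ut x t0)"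
    using dsol_exp_decay[OF \<alpha> _ \<open>t \<ge> t0\<close>] sol unfolding dsol_def by blast
qed

end

theorem theorem2:
  fixes eps K A A' tau :: real
    and F F' :: "real \<Rightarrow> real"
    and a :: "real \<Rightarrow> real \<Rightarrow> real \<Rightarrow> real \<Rightarrow> real \<Rightarrow> real \<Rightarrow> real"
  assumes eps_pos: "eps > 0"
    and F_deriv: "\<forall>s. (F has_real_derivative F' s) (at s)"
    and F'_cont: "continuous_on UNIV F'"
    and a_cont: "continuous_on ({0<..<1} \<times> {0..} \<times> UNIV \<times> UNIV \<times> UNIV \<times> UNIV)
                   (\<lambda>(x, t, p, q, r, s). a x t p q r s)"
    and F0: "F 0 = 0"
    and K_pos: "K > 0" and F'_le: "\<forall>s. F' s \<le> K" and K_less: "K < 3 * pi\<^sup>2 / 4"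
    and a_bdd_below: "bdd_below ((\<lambda>(x, t, p, q, r, s). a x t p q r s) `
                   ({0<..<1} \<times> {0..} \<times> UNIV \<times> UNIV \<times> UNIV \<times> UNIV))"
    and nu_pos: "eps * pi\<^sup>2 + Inf ((\<lambda>(x, t, p, q, r, s). a x t p q r s) `
                   ({0<..<1} \<times> {0..} \<times> UNIV \<times> UNIV \<times> UNIV \<times> UNIV)) > 0"
    and tau: "0 \<le> tau" "tau < 2"
    and A_pos: "A > 0" and A'_nonneg: "A' \<ge> 0"
    and a_growth: "\<forall>phi phix phixx psi. in_Gamma phi phix phixx psi \<longrightarrow>
                     (\<forall>x\<in>{0<..<1}. \<forall>t\<ge>0.
                        a x t (phi x) (phix x) (phixx x) (psi x)
                          \<le> A * rpow (dG phi phix phixx psi) tau + A')"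
  shows "exp_stable_large eps F a"
proof -
  have "3 * pi\<^sup>2 / 4 < pi\<^sup>2" by simp
  then have "K < pi\<^sup>2" using K_less by linarith
  then interpret damped_wave eps K A A' tau F F' a
    using eps_pos F_deriv F'_cont F0 K_pos F'_le a_bdd_below nu_pos tau A_pos A'_nonneg a_growth
    by unfold_locales
  show ?thesis by (rule exp_stable_large)
qed

end
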